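(* Let $d > 8$ be an integer. Consider the game in which Nora and Wanda choose the coefficients of a degree $d$ polynomial from $\mathbb{Q}$. If Nora makes the last move, then she can ensure that the final polynomial has no root in $\overline{\mathbb{Q}}^{\mathrm{ab}}$, the maximal abelian extension of $\mathbb{Q}$.
   Context: The game: Nora and Wanda alternately choose coefficients of $f(x) = a_d x^d + \cdots + a_0$; on each move the current player picks a not-yet-chosen coefficient and assigns it a rational value, subject to $a_d \neq 0$, $a_0 \neq 0$. The maximal abelian extension $\overline{\mathbb{Q}}^{\mathrm{ab}}$ is the union (in a fixed algebraic closure) of all finite abelian extensions of $\mathbb{Q}$, equivalently the union of all cyclotomic fields $\mathbb{Q}(\zeta_n)$. *)

theory Defs
  imports Complex_Main "HOL-Computational_Algebra.Polynomial"
begin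

text \<open>We take the fixed algebraic closure of Q to be the algebraic numbers inside C.\<close>

definition is_subfield :: "complex set \<Rightarrow> bool" where
  "is_subfield K \<longleftrightarrow> 0 \<in> K \<and> 1 \<in> K \<and>
     (\<forall>x\<in>K. \<forall>y\<in>K. x + y \<in> K \<and> x * y \<in> K) \<and>
     (\<forall>x\<in>K. - x \<in> K) \<and> (\<forall>x\<in>K. x \<noteq> 0 \<longrightarrow> inverse x \<in> K)"

definition cyclotomic_field :: "nat \<Rightarrow> complex set" where
  "cyclotomic_field n =
     \<Inter> {K. is_subfield K \<and> cis (2 * pi / real n) \<in> K}"

definition Qab :: "complex set" where
  "Qab = (\<Union>n\<in>{n. n > 0}. cyclotomic_field n)"

text \<open>A position is a partial assignment of rational values to coefficient indices 0..d.\<close>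
definition legal_move :: "nat \<Rightarrow> (nat \<Rightarrow> rat option) \<Rightarrow> nat \<Rightarrow> rat \<Rightarrow> bool" where
  "legal_move d s i v \<longleftrightarrow> i \<le> d \<and> s i = None \<and> ((i = 0 \<or> i = d) \<longrightarrow> v \<noteq> 0)"

definition final_poly :: "nat \<Rightarrow> (nat \<Rightarrow> rat option) \<Rightarrow> rat poly" where
  "final_poly d s = (\<Sum>i\<le>d. monom (the (s i)) i)"

definition nora_goal :: "nat \<Rightarrow> (nat \<Rightarrow> rat option) \<Rightarrow> bool" where
  "nora_goal d s \<longleftrightarrow>
     (\<forall>z::complex. poly (map_poly of_rat (final_poly d s)) z = 0 \<longrightarrow> z \<notin> Qab)"

text \<open>nora_wins d r s: with r moves remaining from position s, Nora (who makes the
  last move, i.e. moves exactly when an odd number of moves remain) can force a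
  final polynomial with no root in Q^ab.\<close>
fun nora_wins :: "nat \<Rightarrow> nat \<Rightarrow> (nat \<Rightarrow> rat option) \<Rightarrow> bool" where
  "nora_wins d 0 s = nora_goal d s"
| "nora_wins d (Suc r) s =
     (if odd (Suc r)
      then (\<exists>i v. legal_move d s i v \<and> nora_wins d r (s(i := Some v)))
      else (\<forall>i v. legal_move d s i v \<longrightarrow> nora_wins d r (s(i := Some v))))"

end

theory Submission
  imports "Berlekamp_Zassenhaus.Factor_Bound" Defs
begin

interpretation of_rat_poly_hom: map_poly_idom_hom "of_rat :: rat \<Rightarrow> 'a::field_char_0" ..

definition rpoly :: "rat poly \<Rightarrow> 'a::field_char_0 \<Rightarrow> 'a" where
  "rpoly q x = poly (map_poly of_rat q) x"

lemma rpoly_mult [simp]: "rpoly (p * q) x = rpoly p x * rpoly q x"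
  and rpoly_add [simp]: "rpoly (p + q) x = rpoly p x + rpoly q x"
  and rpoly_diff [simp]: "rpoly (p - q) x = rpoly p x - rpoly q x"
  and rpoly_uminus [simp]: "rpoly (- p) x = - rpoly p x"
  and rpoly_0 [simp]: "rpoly 0 x = 0"
  and rpoly_1 [simp]: "rpoly 1 x = 1"
  and rpoly_monom [simp]: "rpoly (monom c j) x = of_rat c * x ^ j"
  and rpoly_smult [simp]: "rpoly (smult c p) x = of_rat c * rpoly p x"
  and rpoly_pCons [simp]: "rpoly (pCons c p) x = of_rat c + x * rpoly p x"
  and rpoly_power [simp]: "rpoly (p ^ j) x = rpoly p x ^ j"
  and rpoly_pcompose [simp]: "rpoly (p \<circ>\<^sub>p q) x = rpoly p (rpoly q x)"
  and rpoly_sum: "rpoly (sum f A) x = (\<Sum>a\<in>A. rpoly (f a) x)"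
  unfolding rpoly_def
  by (simp_all add: hom_distribs poly_monom poly_sum of_rat_hom.map_poly_pcompose poly_pcompose)

lemma rpoly_0_coeff: "rpoly q 0 = of_rat (coeff q 0)"
  unfolding rpoly_def by (simp add: poly_0_coeff_0)

lemma of_real_of_rat_eq: "of_real (of_rat r :: real) = (of_rat r :: 'a::real_field)"
  by (cases r) (simp add: of_rat_rat)

lemma of_real_rpoly: "of_real (rpoly q (x::real)) = (rpoly q (of_real x) :: 'a::real_field)"
  unfolding rpoly_def by (simp add: poly_altdef of_real_of_rat_eq)

lemma of_rat_in_Reals: "(of_rat r :: 'a::real_field) \<in> \<real>"
  by (metis Reals_of_real of_real_of_rat_eq)

lemma cnj_rpoly: "cnj (rpoly q z) = rpoly q (cnj z)"
  unfolding rpoly_def by (rule poly_cnj_real) (simp add: coeff_map_poly of_rat_in_Reals)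

lemma rpoly_root_dvd: "p dvd q \<Longrightarrow> rpoly p x = 0 \<Longrightarrow> rpoly q x = 0"
  by (auto elim!: dvdE)

lemma rpoly_unit_nonzero:
  assumes "is_unit (g :: rat poly)"
  shows "rpoly g x \<noteq> 0"
proof -
  have "g \<noteq> 0" "degree g = 0" using assms is_unit_iff_degree by auto
  then obtain c where "g = [:c:]" "c \<noteq> 0" by (metis degree_eq_zeroE pCons_0_0)
  thus ?thesis by simp
qed

lemma bezout_if_irreducible_not_dvd:
  fixes m q :: "'a::{factorial_semiring, euclidean_ring_gcd}"
  assumes "irreducible m" and "\<not> m dvd q"
  obtains a b where "a * m + b * q = 1"
proof -
  have "coprime m q"
    using assms by (simp add: irreducible_imp_prime_elem prime_elem_imp_coprime)
  thus ?thesis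
    using that bezout_coefficients_fst_snd[of m q] by (simp add: coprime_imp_gcd_eq_1)
qed

lemma irreducible_dvd_if_common_root:
  fixes m h :: "rat poly" and z :: "'a::field_char_0"
  assumes "irreducible m" and "rpoly m z = 0" and "rpoly h z = 0"
  shows "m dvd h"
proof (rule ccontr)
  assume "\<not> m dvd h"
  then obtain a b where "a * m + b * h = 1" using bezout_if_irreducible_not_dvd assms(1) by blast
  hence "rpoly (a * m + b * h) z = 1" by simp
  thus False using assms(2,3) by simp
qed

lemma irreducible_factor_with_root:
  fixes P :: "rat poly" and z :: "'a::field_char_0"
  assumes "P \<noteq> 0" "rpoly P z = 0"
  shows "\<exists>m. irreducible m \<and> m dvd P \<and> rpoly m z = 0"
  using assms
proof (induction "degree P" arbitrary: P rule: less_induct)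
  case less
  show ?case
  proof (cases "irreducible P")
    case False
    have "\<not> is_unit P" using rpoly_unit_nonzero less.prems by blast
    with False less.prems(1) obtain a b where ab: "P = a * b" "\<not> is_unit a" "\<not> is_unit b"
      unfolding irreducible_def by auto
    have "a \<noteq> 0" "b \<noteq> 0" using ab less.prems(1) by auto
    with ab have "degree a > 0" "degree b > 0" using is_unit_iff_degree by blast+
    hence deg: "degree a < degree P" "degree b < degree P"
      using ab(1) degree_mult_eq[OF \<open>a \<noteq> 0\<close> \<open>b \<noteq> 0\<close>] by simp_all
    have "rpoly a z = 0 \<or> rpoly b z = 0" using less.prems(2) ab(1) by simp
    thus ?thesis
    proof
      assume "rpoly a z = 0"
      with less.hyps[OF deg(1) \<open>a \<noteq> 0\<close>] show ?thesis using ab(1) by (metis dvd_mult2)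
    next
      assume "rpoly b z = 0"
      with less.hyps[OF deg(2) \<open>b \<noteq> 0\<close>] show ?thesis using ab(1) by (metis dvd_mult)
    qed
  qed (use less in auto)
qed

lemma card_roots_irreducible:
  fixes p :: "rat poly"
  assumes irr: "irreducible p"
  shows "card {z::complex. rpoly p z = 0} = degree p"
proof -
  let ?P = "map_poly (of_rat :: rat \<Rightarrow> complex) p"
  have "p \<noteq> 0" "\<not> is_unit p" using irr by auto
  hence dp: "degree p > 0" using is_unit_iff_degree by auto
  have "rsquarefree ?P"
    unfolding rsquarefree_roots
  proof (intro allI notI)
    fix a assume "poly ?P a = 0 \<and> poly (pderiv ?P) a = 0"
    hence "rpoly p a = 0" "rpoly (pderiv p) a = 0"
      by (simp_all add: rpoly_def of_rat_hom.map_poly_pderiv)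
    hence "p dvd pderiv p" using irreducible_dvd_if_common_root[OF irr] by blast
    moreover have "pderiv p \<noteq> 0" "degree (pderiv p) < degree p"
      using dp by (simp_all add: pderiv_eq_0_iff degree_pderiv)
    ultimately show False by (simp add: dvd_imp_degree_le leD)
  qed
  hence "card {x. poly ?P x = 0} = degree ?P"
    using rsquarefree_card_degree \<open>p \<noteq> 0\<close> by simp
  thus ?thesis by (simp add: rpoly_def)
qed

subsection \<open>The Galois action on a cyclotomic field\<close>

definition zeta :: "nat \<Rightarrow> complex" where "zeta n = cis (2 * pi / real n)"

lemma zeta_power: "zeta n ^ j = cis (2 * pi * real j / real n)"
  unfolding zeta_def DeMoivre by (simp add: field_simps)

lemma zeta_power_n: "n > 0 \<Longrightarrow> zeta n ^ n = 1"
  unfolding zeta_power by simp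

lemma zeta_power_mod:
  assumes "n > 0"
  shows "zeta n ^ j = zeta n ^ (j mod n)"
proof -
  have "zeta n ^ j = zeta n ^ (n * (j div n) + j mod n)" by simp
  also have "\<dots> = (zeta n ^ n) ^ (j div n) * zeta n ^ (j mod n)"
    by (simp only: power_add power_mult)
  finally have "zeta n ^ j = (zeta n ^ n) ^ (j div n) * zeta n ^ (j mod n)" .
  thus ?thesis using zeta_power_n[OF assms] by simp
qed

lemma zeta_power_eq_1_iff:
  assumes n: "n > 0"
  shows "zeta n ^ j = 1 \<longleftrightarrow> n dvd j"
proof
  assume "zeta n ^ j = 1"
  hence eq: "(\<lambda>k. cis (2 * pi * real k / real n)) (j mod n) = (\<lambda>k. cis (2 * pi * real k / real n)) 0"
    using zeta_power_mod[OF n, of j] unfolding zeta_power by simp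
  have inj: "inj_on (\<lambda>k. cis (2 * pi * real k / real n)) {..<n}"
    using bij_betw_roots_unity[OF n] by (simp add: bij_betw_def)
  have "j mod n = 0" using inj_onD[OF inj eq] n by simp
  thus "n dvd j" by auto
next
  assume "n dvd j"
  thus "zeta n ^ j = 1" using zeta_power_n[OF n] by (auto simp: power_mult elim!: dvdE)
qed

lemma root_of_unity_zeta_power:
  assumes "n > 0" and "z ^ n = 1"
  shows "\<exists>j<n. z = zeta n ^ j"
  using bij_betw_roots_unity[OF assms(1)] assms(2) by (auto simp: bij_betw_def zeta_power)

lemma coeff_prod_linear_rpoly:
  fixes e :: "'b \<Rightarrow> rat poly"
  assumes "finite T"
  shows "\<exists>E. \<forall>(x::complex) i. coeff (\<Prod>u\<in>T. [:- rpoly (e u) x, 1:]) i = rpoly (E i) x"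
  using assms
proof (induction T rule: finite_induct)
  case empty
  show ?case by (rule exI[of _ "\<lambda>i. if i = 0 then 1 else 0"]) (auto simp: coeff_1)
next
  case (insert u T)
  then obtain E where E: "\<forall>(x::complex) i. coeff (\<Prod>u\<in>T. [:- rpoly (e u) x, 1:]) i = rpoly (E i) x"
    by blast
  define E' where "E' i = - e u * E i + (case i of 0 \<Rightarrow> 0 | Suc j \<Rightarrow> E j)" for i
  have "coeff (\<Prod>u\<in>insert u T. [:- rpoly (e u) x, 1:]) i = rpoly (E' i) x" for x :: complex and i
  proof -
    let ?P = "\<Prod>u\<in>T. [:- rpoly (e u) x, 1:]"
    have "(\<Prod>u\<in>insert u T. [:- rpoly (e u) x, 1:]) = smult (- rpoly (e u) x) ?P + pCons 0 ?P"
      using insert by (simp add: mult_pCons_left)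
    thus ?thesis unfolding E'_def using E by (cases i) (auto simp: coeff_pCons)
  qed
  thus ?case by blast
qed

lemma poly_rational_coeffs:
  fixes P :: "'a::field_char_0 poly"
  assumes "\<And>i. \<exists>r. coeff P i = of_rat r"
  obtains P0 where "map_poly of_rat P0 = P"
proof -
  obtain r where r: "\<And>i. coeff P i = of_rat (r i)"
    using assms choice[of "\<lambda>i r. coeff P i = of_rat r"] by blast
  define P0 where "P0 = (\<Sum>i\<le>degree P. monom (r i) i)"
  have "coeff (map_poly of_rat P0) j = coeff P j" for j
    using r[of j] by (cases "j \<le> degree P") (auto simp: P0_def coeff_sum coeff_eq_0)
  hence "map_poly of_rat P0 = P" by (rule poly_eqI)
  thus ?thesis by (rule that)
qed

text \<open>If \<open>m\<close> is the minimal polynomial of \<open>\<zeta>\<^sub>n\<close>, every automorphism of \<open>\<rat>(\<zeta>\<^sub>n)\<close> is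
  \<open>\<zeta>\<^sub>n \<mapsto> \<zeta>\<^sub>n\<^sup>j\<close> for a root \<open>\<zeta>\<^sub>n\<^sup>j\<close> of \<open>m\<close>. Instead of Galois theory we work directly with the
  set of roots of \<open>m\<close> and the maps \<open>u \<mapsto> u\<^sup>j\<close>, which permute it and commute with each other.\<close>

locale zeta_min_poly =
  fixes n :: nat and m :: "rat poly"
  assumes n_pos: "n > 0" and irreducible_m: "irreducible m" and m_zeta: "rpoly m (zeta n) = 0"
begin

definition conjugates :: "complex set" where "conjugates = {z. rpoly m z = 0}"

lemma m_nonzero: "m \<noteq> 0"
  using irreducible_m by auto

lemma degree_m: "degree m > 0"
proof -
  have "\<not> is_unit m" using irreducible_m unfolding irreducible_def by blast
  thus ?thesis using m_nonzero is_unit_iff_degree by auto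
qed

lemma finite_conjugates: "finite conjugates"
  unfolding conjugates_def rpoly_def by (rule poly_roots_finite) (simp add: m_nonzero)

lemma card_conjugates: "card conjugates = degree m"
  unfolding conjugates_def using card_roots_irreducible[OF irreducible_m] .

lemma zeta_conjugate: "zeta n \<in> conjugates"
  unfolding conjugates_def using m_zeta by simp

lemma conjugate_root_if_zeta_root:
  assumes "rpoly p (zeta n) = 0" and "u \<in> conjugates"
  shows "rpoly p u = 0"
proof (rule rpoly_root_dvd)
  show "m dvd p" by (rule irreducible_dvd_if_common_root[OF irreducible_m m_zeta assms(1)])
  show "rpoly m u = 0" using assms(2) unfolding conjugates_def by simp
qed

lemma conjugate_power_n:
  assumes "u \<in> conjugates"
  shows "u ^ n = 1"
proof -
  have "rpoly (monom 1 n - 1) (zeta n) = 0" using zeta_power_n[OF n_pos] by simp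
  hence "rpoly (monom 1 n - 1) u = 0" by (rule conjugate_root_if_zeta_root[OF _ assms])
  thus ?thesis by simp
qed

lemma conjugate_nonzero:
  assumes "u \<in> conjugates"
  shows "u \<noteq> 0"
  using conjugate_power_n[OF assms] n_pos by (auto simp: power_0_left)

lemma conjugate_order_dvd:
  assumes "u \<in> conjugates" and "u ^ i = 1"
  shows "n dvd i"
proof -
  have "rpoly (monom 1 i - 1) u = 0" using assms(2) by simp
  hence "m dvd monom 1 i - 1"
    using irreducible_dvd_if_common_root[OF irreducible_m] assms(1) unfolding conjugates_def by blast
  hence "rpoly (monom 1 i - 1) (zeta n) = 0" by (rule rpoly_root_dvd[OF _ m_zeta])
  hence "zeta n ^ i = 1" by simp
  thus ?thesis using zeta_power_eq_1_iff[OF n_pos] by simp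
qed

lemma conjugate_power_inj:
  assumes u: "u \<in> conjugates" and "a < n" "b < n" and eq: "u ^ a = u ^ b"
  shows "a = b"
proof -
  have "n dvd a - b" if "u ^ a = u ^ b" for a b
  proof (cases "b \<le> a")
    case True
    hence "u ^ (a - b) * u ^ b = 1 * u ^ b" using that by (simp add: power_add[symmetric])
    hence "u ^ (a - b) = 1" using conjugate_nonzero[OF u] by simp
    thus ?thesis by (rule conjugate_order_dvd[OF u])
  qed simp
  hence "n dvd a - b" "n dvd b - a" using eq by simp_all
  moreover have "a - b < n" "b - a < n" using assms(2,3) by linarith+
  ultimately have "\<not> 0 < a - b" "\<not> 0 < b - a" using nat_dvd_not_less by blast+
  thus ?thesis by linarith
qed

definition dlog :: "complex \<Rightarrow> nat" where "dlog u = (SOME j. j < n \<and> u = zeta n ^ j)"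

lemma dlog:
  assumes "u \<in> conjugates"
  shows "dlog u < n" and "u = zeta n ^ dlog u"
proof -
  have "\<exists>j<n. u = zeta n ^ j" using root_of_unity_zeta_power[OF n_pos conjugate_power_n[OF assms]] .
  hence "dlog u < n \<and> u = zeta n ^ dlog u" unfolding dlog_def by (rule someI_ex)
  thus "dlog u < n" "u = zeta n ^ dlog u" by auto
qed

lemma conjugate_power_dlog_commute:
  assumes u: "u \<in> conjugates" and w: "w \<in> conjugates"
  shows "u ^ dlog w = w ^ dlog u"
proof -
  have "u ^ dlog w = (zeta n ^ dlog u) ^ dlog w" by (rule arg_cong[OF dlog(2)[OF u]])
  also have "\<dots> = (zeta n ^ dlog w) ^ dlog u" by (simp add: power_mult[symmetric] mult.commute)
  also have "\<dots> = w ^ dlog u" by (rule arg_cong[OF dlog(2)[OF w, symmetric]])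
  finally show ?thesis .
qed

lemma conjugate_power_conjugate:
  assumes "u \<in> conjugates" and w: "w \<in> conjugates"
  shows "w ^ dlog u \<in> conjugates"
proof -
  have "rpoly (m \<circ>\<^sub>p monom 1 (dlog u)) (zeta n) = rpoly m (zeta n ^ dlog u)" by simp
  also have "\<dots> = 0"
    using assms(1) unfolding dlog(2)[OF assms(1), symmetric] conjugates_def by simp
  finally have "rpoly (m \<circ>\<^sub>p monom 1 (dlog u)) (zeta n) = 0" .
  hence "rpoly (m \<circ>\<^sub>p monom 1 (dlog u)) w = 0" by (rule conjugate_root_if_zeta_root[OF _ w])
  thus ?thesis unfolding conjugates_def by simp
qed

lemma bij_betw_conjugates_power:
  assumes w: "w \<in> conjugates"
  shows "bij_betw (\<lambda>u. u ^ dlog w) conjugates conjugates"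
proof -
  have into: "(\<lambda>u. u ^ dlog w) ` conjugates \<subseteq> conjugates"
  proof
    fix y assume "y \<in> (\<lambda>u. u ^ dlog w) ` conjugates"
    then obtain u where u: "u \<in> conjugates" "y = u ^ dlog w" by auto
    thus "y \<in> conjugates"
      using conjugate_power_conjugate[OF u(1) w] conjugate_power_dlog_commute[OF u(1) w] by simp
  qed
  have "inj_on (\<lambda>u. u ^ dlog w) conjugates"
  proof (rule inj_onI)
    fix u v assume u: "u \<in> conjugates" and v: "v \<in> conjugates" and "u ^ dlog w = v ^ dlog w"
    hence "w ^ dlog u = w ^ dlog v"
      using conjugate_power_dlog_commute[OF u w] conjugate_power_dlog_commute[OF v w] by simp
    hence "dlog u = dlog v" using conjugate_power_inj[OF w dlog(1)[OF u] dlog(1)[OF v]] by simp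
    thus "u = v" using dlog(2)[OF u] dlog(2)[OF v] by simp
  qed
  thus ?thesis unfolding bij_betw_def using endo_inj_surj[OF finite_conjugates into] by simp
qed

text \<open>Reducing modulo \<open>m\<close> gives a polynomial of degree below \<open>deg m\<close> that is constant on
  the \<open>deg m\<close> conjugates, hence constant.\<close>

lemma rational_if_invariant:
  assumes "\<forall>w\<in>conjugates. rpoly E w = rpoly E (zeta n)"
  shows "\<exists>r. rpoly E (zeta n) = of_rat r"
proof -
  define c where "c = rpoly E (zeta n)"
  define Q where "Q = map_poly (of_rat :: rat \<Rightarrow> complex) (E mod m) - [:c:]"
  have "rpoly (E mod m) w = c" if "w \<in> conjugates" for w
  proof -
    have "rpoly E w = rpoly (E div m) w * rpoly m w + rpoly (E mod m) w"
      using arg_cong[OF div_mult_mod_eq[of E m], of "\<lambda>p. rpoly p w"] by (simp only: rpoly_add rpoly_mult)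
    thus ?thesis using assms that unfolding c_def conjugates_def by simp
  qed
  hence roots: "conjugates \<subseteq> {x. poly Q x = 0}" unfolding Q_def rpoly_def by auto
  have "degree (E mod m) < degree m"
    using degree_mod_less[OF m_nonzero, of E] degree_m by auto
  hence "degree Q < degree m"
    using degree_diff_le_max[of "map_poly of_rat (E mod m)" "[:c:]"] degree_m unfolding Q_def by simp
  have "Q = 0"
  proof (rule ccontr)
    assume "Q \<noteq> 0"
    hence "card conjugates \<le> card {x. poly Q x = 0}"
      by (intro card_mono[OF poly_roots_finite roots])
    also have "\<dots> \<le> degree Q" by (rule card_poly_roots_bound[OF \<open>Q \<noteq> 0\<close>])
    finally have "card conjugates \<le> degree Q" .
    thus False using \<open>degree Q < degree m\<close> card_conjugates by simp
  qed
  hence "coeff (map_poly of_rat (E mod m)) 0 = c" unfolding Q_def by simp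
  hence "of_rat (coeff (E mod m) 0) = c" by simp
  thus ?thesis unfolding c_def by (intro exI[of _ "coeff (E mod m) 0"]) simp
qed

text \<open>Since the maps \<open>u \<mapsto> u\<^sup>j\<close> permute the conjugates, every coefficient of this product is a
  rational polynomial in \<open>\<zeta>\<^sub>n\<close> that is invariant under conjugation, hence rational.\<close>

lemma prod_conjugates_rational:
  obtains P0 where "map_poly of_rat P0 = (\<Prod>u\<in>conjugates. [:- rpoly q u, 1:])"
proof (rule poly_rational_coeffs)
  let ?P = "\<Prod>u\<in>conjugates. [:- rpoly q u, 1:]"
  obtain E where E: "\<And>(x::complex) i. coeff (\<Prod>u\<in>conjugates. [:- rpoly (q \<circ>\<^sub>p monom 1 (dlog u)) x, 1:]) i
      = rpoly (E i) x"
    using coeff_prod_linear_rpoly[OF finite_conjugates, of "\<lambda>u. q \<circ>\<^sub>p monom 1 (dlog u)"] by blast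
  have prod_eq: "(\<Prod>u\<in>conjugates. [:- rpoly (q \<circ>\<^sub>p monom 1 (dlog u)) w, 1:]) = ?P"
    if w: "w \<in> conjugates" for w
  proof -
    have "(\<Prod>u\<in>conjugates. [:- rpoly (q \<circ>\<^sub>p monom 1 (dlog u)) w, 1:])
        = (\<Prod>u\<in>conjugates. [:- rpoly q (u ^ dlog w), 1:])"
      using conjugate_power_dlog_commute[OF _ w] by (intro prod.cong) simp_all
    also have "\<dots> = ?P"
      by (rule prod.reindex_bij_betw[OF bij_betw_conjugates_power[OF w], of "\<lambda>y. [:- rpoly q y, 1:]"])
    finally show ?thesis .
  qed
  have coeff_P: "coeff ?P i = rpoly (E i) w" if "w \<in> conjugates" for w i
    using E[of w i] prod_eq[OF that] by simp
  show "\<exists>r. coeff ?P i = of_rat r" for i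
  proof -
    have "\<forall>w\<in>conjugates. rpoly (E i) w = rpoly (E i) (zeta n)"
      using coeff_P[of _ i] coeff_P[OF zeta_conjugate, of i] by simp
    then obtain r where "rpoly (E i) (zeta n) = of_rat r" using rational_if_invariant by blast
    thus ?thesis using coeff_P[OF zeta_conjugate] by auto
  qed
qed

lemma root_eq_at_conjugate:
  assumes f: "irreducible f" and "rpoly f (rpoly q (zeta n)) = 0" and "rpoly f \<gamma> = 0"
  shows "\<exists>u\<in>conjugates. \<gamma> = rpoly q u"
proof -
  obtain P0 where P0: "map_poly of_rat P0 = (\<Prod>u\<in>conjugates. [:- rpoly q u, 1:])"
    using prod_conjugates_rational by blast
  have rpoly_P0: "rpoly P0 x = (\<Prod>u\<in>conjugates. x - rpoly q u)" for x
    unfolding rpoly_def P0 poly_prod by simp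
  have "rpoly P0 (rpoly q (zeta n)) = 0"
    unfolding rpoly_P0 using zeta_conjugate finite_conjugates by (auto simp: prod_zero_iff)
  hence "f dvd P0" using irreducible_dvd_if_common_root[OF f assms(2)] by blast
  hence "rpoly P0 \<gamma> = 0" using rpoly_root_dvd assms(3) by blast
  thus ?thesis unfolding rpoly_P0 using finite_conjugates by (auto simp: prod_zero_iff)
qed

text \<open>Complex conjugation is the automorphism \<open>\<zeta>\<^sub>n \<mapsto> \<zeta>\<^sub>n\<^sup>n\<^sup>-\<^sup>1\<close>. Because the Galois group is
  abelian it commutes with all other automorphisms, so reality of \<open>q(\<zeta>\<^sub>n)\<close> propagates.\<close>

lemma cnj_conjugate:
  assumes u: "u \<in> conjugates"
  shows "cnj u = u ^ (n - 1)"
proof -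
  have un: "u ^ n = 1" using conjugate_power_n[OF u] .
  hence "cmod u = 1" using power_eq_1_iff[OF un] n_pos by simp
  hence "u * cnj u = 1" using complex_norm_square[of u] by simp
  moreover have "u * u ^ (n - 1) = u ^ Suc (n - 1)" by simp
  hence "u * u ^ (n - 1) = 1" using un n_pos by simp
  ultimately have "u * cnj u = u * u ^ (n - 1)" by simp
  thus ?thesis using conjugate_nonzero[OF u] by simp
qed

lemma real_at_conjugates:
  assumes "rpoly q (zeta n) \<in> \<real>" and u: "u \<in> conjugates"
  shows "rpoly q u \<in> \<real>"
proof -
  define Q where "Q = q - q \<circ>\<^sub>p monom 1 (n - 1)"
  have "rpoly q (zeta n ^ (n - 1)) = cnj (rpoly q (zeta n))"
    using cnj_conjugate[OF zeta_conjugate] by (simp add: cnj_rpoly)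
  also have "\<dots> = rpoly q (zeta n)" using assms(1) by (simp add: Reals_cnj_iff)
  finally have "rpoly Q (zeta n) = 0" by (simp add: Q_def)
  hence "rpoly Q u = 0" by (rule conjugate_root_if_zeta_root[OF _ u])
  hence "rpoly q u = rpoly q (cnj u)" unfolding Q_def using cnj_conjugate[OF u] by simp
  thus ?thesis by (simp add: cnj_rpoly[symmetric] Reals_cnj_iff)
qed

definition Qzeta :: "complex set" where "Qzeta = {z. \<exists>q. z = rpoly q (zeta n)}"

lemma Qzeta_inverse:
  assumes "z \<in> Qzeta" "z \<noteq> 0"
  shows "inverse z \<in> Qzeta"
proof -
  obtain q where q: "z = rpoly q (zeta n)" using assms(1) unfolding Qzeta_def by auto
  have "\<not> m dvd q" using rpoly_root_dvd[OF _ m_zeta] q assms(2) by blast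
  then obtain a b where "a * m + b * q = 1"
    using bezout_if_irreducible_not_dvd irreducible_m by blast
  hence "rpoly (a * m + b * q) (zeta n) = 1" by simp
  hence "rpoly b (zeta n) * z = 1" using m_zeta q by simp
  hence "inverse z = rpoly b (zeta n)" by (simp add: inverse_unique mult.commute)
  thus ?thesis unfolding Qzeta_def by auto
qed

lemma Qzeta_subfield: "is_subfield Qzeta"
  unfolding is_subfield_def
proof (intro conjI ballI impI)
  show "0 \<in> Qzeta" "1 \<in> Qzeta"
    unfolding Qzeta_def by (intro CollectI exI[of _ 0], simp, intro CollectI exI[of _ 1], simp)
  fix x assume x: "x \<in> Qzeta"
  then obtain p where p: "x = rpoly p (zeta n)" unfolding Qzeta_def by auto
  show "- x \<in> Qzeta" unfolding Qzeta_def p by (intro CollectI exI[of _ "- p"]) simp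
  show "x \<noteq> 0 \<Longrightarrow> inverse x \<in> Qzeta" using Qzeta_inverse x by blast
  fix y assume "y \<in> Qzeta"
  then obtain q where q: "y = rpoly q (zeta n)" unfolding Qzeta_def by auto
  show "x + y \<in> Qzeta" "x * y \<in> Qzeta"
    unfolding Qzeta_def p q
    by (intro CollectI exI[of _ "p + q"], simp, intro CollectI exI[of _ "p * q"], simp)
qed

lemma cyclotomic_field_subset_Qzeta: "cyclotomic_field n \<subseteq> Qzeta"
proof -
  have "zeta n \<in> Qzeta" unfolding Qzeta_def by (rule CollectI, rule exI[of _ "[:0, 1:]"]) simp
  thus ?thesis unfolding cyclotomic_field_def using Qzeta_subfield unfolding zeta_def by auto
qed

end

lemma zeta_min_poly_exists:
  assumes "n > 0"
  shows "\<exists>m. zeta_min_poly n m"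
proof -
  have nonzero: "(monom 1 n - 1 :: rat poly) \<noteq> 0"
  proof
    assume "(monom 1 n - 1 :: rat poly) = 0"
    hence "coeff (monom 1 n - 1 :: rat poly) n = 0" by simp
    thus False using assms by (simp add: coeff_monom)
  qed
  have "rpoly (monom 1 n - 1) (zeta n) = 0" using zeta_power_n[OF assms] by simp
  from irreducible_factor_with_root[OF nonzero this]
  obtain m where "irreducible m" "rpoly m (zeta n) = 0" by blast
  thus ?thesis using assms zeta_min_poly.intro by blast
qed

text \<open>An irreducible polynomial with roots in \<open>\<rat>\<^sup>a\<^sup>b\<close> has its splitting field inside one
  \<open>\<rat>(\<zeta>\<^sub>n)\<close>, whose Galois group is abelian; so complex conjugation acts on its roots by an
  element commuting with the transitive Galois action, and fixes all roots if it fixes one.\<close>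

theorem not_in_Qab_if_real_and_nonreal_roots:
  fixes f :: "rat poly" and x :: real and z\<^sub>0 z :: complex
  assumes irr: "irreducible f" and real_root: "rpoly f (complex_of_real x) = 0"
    and nonreal_root: "rpoly f z\<^sub>0 = 0" "z\<^sub>0 \<notin> \<real>"
    and root: "rpoly f z = 0"
  shows "z \<notin> Qab"
proof
  assume "z \<in> Qab"
  then obtain n where n: "n > 0" "z \<in> cyclotomic_field n" unfolding Qab_def by auto
  obtain m where "zeta_min_poly n m" using zeta_min_poly_exists[OF n(1)] by blast
  then interpret zeta_min_poly n m .
  obtain q where "z = rpoly q (zeta n)"
    using cyclotomic_field_subset_Qzeta n(2) unfolding Qzeta_def by auto
  hence "rpoly f (rpoly q (zeta n)) = 0" using root by simp
  then obtain u0 where u0: "u0 \<in> conjugates" "complex_of_real x = rpoly q u0"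
    using root_eq_at_conjugate[OF irr _ real_root] by blast
  define q' where "q' = q \<circ>\<^sub>p monom 1 (dlog u0)"
  have q'_zeta: "rpoly q' (zeta n) = complex_of_real x"
    unfolding q'_def using u0(2) by (simp add: dlog(2)[OF u0(1), symmetric])
  hence "rpoly f (rpoly q' (zeta n)) = 0" using real_root by simp
  then obtain u where u: "u \<in> conjugates" "z\<^sub>0 = rpoly q' u"
    using root_eq_at_conjugate[OF irr _ nonreal_root(1)] by blast
  have "rpoly q' u \<in> \<real>" using real_at_conjugates[OF _ u(1)] q'_zeta by simp
  thus False using u(2) nonreal_root(2) by simp
qed

section \<open>The polynomial before Nora's last move\<close>

definition complete_poly :: "nat \<Rightarrow> nat \<Rightarrow> (nat \<Rightarrow> rat) \<Rightarrow> rat \<Rightarrow> rat poly" where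
  "complete_poly d k a t = (\<Sum>i\<le>d. monom (if i = k then t else a i) i)"

lemma coeff_complete_poly:
  "coeff (complete_poly d k a t) j = (if j \<le> d then if j = k then t else a j else 0)"
  unfolding complete_poly_def by (auto simp: coeff_sum coeff_monom)

lemma degree_complete_poly:
  assumes "(if d = k then t else a d) \<noteq> 0"
  shows "degree (complete_poly d k a t) = d"
proof (rule antisym)
  show "degree (complete_poly d k a t) \<le> d" by (rule degree_le) (simp add: coeff_complete_poly)
  show "d \<le> degree (complete_poly d k a t)"
    by (rule le_degree) (use assms in \<open>auto simp: coeff_complete_poly\<close>)
qed

lemma complete_poly_split:
  assumes "k \<le> d"
  shows "complete_poly d k a t = complete_poly d k a 0 + monom t k"
  by (rule poly_eqI) (use assms in \<open>auto simp: coeff_complete_poly coeff_monom\<close>)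

lemma rpoly_complete_poly:
  assumes "k \<le> d"
  shows "rpoly (complete_poly d k a t) z = of_rat t * z ^ k + (\<Sum>i\<in>{..d}-{k}. of_rat (a i) * z ^ i)"
proof -
  have "rpoly (complete_poly d k a t) z = (\<Sum>i\<le>d. of_rat (if i = k then t else a i) * z ^ i)"
    unfolding complete_poly_def rpoly_sum by simp
  also have "\<dots> = of_rat t * z ^ k + (\<Sum>i\<in>{..d}-{k}. of_rat (a i) * z ^ i)"
    using assms by (subst sum.remove[of _ k]) (auto intro!: sum.cong)
  finally show ?thesis .
qed

lemma complete_poly_real_root:
  fixes a :: "nat \<Rightarrow> rat"
  assumes k: "0 < k" "k \<le> d"
    and sign: "real_of_rat t * real_of_rat (a 0) < 0"
    and large: "\<bar>real_of_rat t\<bar> > (\<Sum>i\<le>d. \<bar>real_of_rat (a i)\<bar>)"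
  shows "\<exists>x::real. rpoly (complete_poly d k a t) x = 0"
proof -
  let ?p = "map_poly (of_rat :: rat \<Rightarrow> real) (complete_poly d k a t)"
  have p0: "poly ?p 0 = real_of_rat (a 0)"
    using rpoly_0_coeff[of "complete_poly d k a t"] k unfolding rpoly_def by (simp add: coeff_complete_poly)
  define s where "s = (\<Sum>i\<in>{..d}-{k}. real_of_rat (a i))"
  have p1: "poly ?p 1 = real_of_rat t + s"
    using rpoly_complete_poly[OF k(2), of a t "1::real"] unfolding rpoly_def s_def by simp
  have "\<bar>s\<bar> \<le> (\<Sum>i\<le>d. \<bar>real_of_rat (a i)\<bar>)"
    unfolding s_def by (rule order_trans[OF sum_abs sum_mono2]) auto
  hence "\<bar>s\<bar> < \<bar>real_of_rat t\<bar>" using large by linarith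
  hence "poly ?p 0 * poly ?p 1 < 0"
  proof (cases "real_of_rat t > 0")
    case True
    hence "real_of_rat (a 0) < 0" using sign by (simp add: mult_less_0_iff)
    moreover have "real_of_rat t + s > 0" using \<open>\<bar>s\<bar> < _\<close> True by linarith
    ultimately show ?thesis unfolding p0 p1 by (simp add: mult_neg_pos)
  next
    case False
    hence "real_of_rat t < 0" using sign by (cases "real_of_rat t = 0") auto
    hence "real_of_rat (a 0) > 0" using sign by (simp add: mult_less_0_iff)
    moreover have "real_of_rat t + s < 0" using \<open>\<bar>s\<bar> < _\<close> \<open>real_of_rat t < 0\<close> by linarith
    ultimately show ?thesis unfolding p0 p1 by (simp add: mult_pos_neg)
  qed
  then obtain x where "poly ?p x = 0" using poly_IVT[of 0 1 ?p] by auto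
  thus ?thesis unfolding rpoly_def by blast
qed

lemma complete_poly_real_root_0:
  fixes a :: "nat \<Rightarrow> rat"
  assumes d: "0 < d" and sign: "real_of_rat t * real_of_rat (a d) < 0"
  shows "\<exists>x::real. rpoly (complete_poly d 0 a t) x = 0"
proof -
  let ?p = "map_poly (of_rat :: rat \<Rightarrow> real) (complete_poly d 0 a t)"
  have p0: "poly ?p 0 = real_of_rat t"
    using rpoly_0_coeff[of "complete_poly d 0 a t"] unfolding rpoly_def by (simp add: coeff_complete_poly)
  have "a d \<noteq> 0" using sign by auto
  hence "degree (complete_poly d 0 a t) = d" using d by (intro degree_complete_poly) simp
  hence lc: "lead_coeff ?p = real_of_rat (a d)" using d by (simp add: coeff_complete_poly)
  have "\<exists>x>0. poly ?p 0 * poly ?p x < 0"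
  proof (cases "a d > 0")
    case True
    then obtain x0 where x0: "\<forall>x\<ge>x0. real_of_rat (a d) \<le> poly ?p x"
      using poly_pinfty_gt_lc[of ?p] lc by auto
    hence "real_of_rat (a d) \<le> poly ?p (max x0 1)" by simp
    moreover have "real_of_rat (a d) > 0" using True by simp
    ultimately have "poly ?p (max x0 1) > 0" by linarith
    moreover have "real_of_rat t < 0" using sign True by (simp add: mult_less_0_iff)
    ultimately show ?thesis unfolding p0 by (intro exI[of _ "max x0 1"]) (simp add: mult_neg_pos)
  next
    case False
    hence neg: "real_of_rat (a d) < 0" using \<open>a d \<noteq> 0\<close> by simp
    then obtain x0 where x0: "\<forall>x\<ge>x0. - real_of_rat (a d) \<le> - poly ?p x"
      using poly_pinfty_gt_lc[of "- ?p"] lc by auto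
    hence "- real_of_rat (a d) \<le> - poly ?p (max x0 1)" by simp
    hence "poly ?p (max x0 1) < 0" using neg by linarith
    moreover have "real_of_rat t > 0" using sign neg by (simp add: mult_less_0_iff)
    ultimately show ?thesis unfolding p0 by (intro exI[of _ "max x0 1"]) (simp add: mult_pos_neg)
  qed
  then obtain x where "x > 0" "poly ?p 0 * poly ?p x < 0" by blast
  from poly_IVT[OF this] obtain y where "poly ?p y = 0" by blast
  thus ?thesis unfolding rpoly_def by blast
qed

lemma has_real_derivative_rpoly: "((\<lambda>x::real. rpoly q x) has_real_derivative rpoly (pderiv q) x) (at x)"
  unfolding rpoly_def of_rat_hom.map_poly_pderiv by (rule poly_DERIV)

lemma interior_max_ge:
  fixes h h' :: "real \<Rightarrow> real"
  assumes "x1 < x2" "x2 < x3"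
    and deriv: "\<And>x. x1 \<le> x \<Longrightarrow> x \<le> x3 \<Longrightarrow> (h has_real_derivative h' x) (at x)"
    and "h x1 = t" "h x2 = t" "h x3 = t"
  shows "\<exists>c. x1 < c \<and> c < x3 \<and> h' c = 0 \<and> h c \<ge> t"
proof -
  have "\<forall>x. x1 \<le> x \<and> x \<le> x3 \<longrightarrow> isCont h x" using deriv DERIV_isCont by blast
  with isCont_eq_Ub[of x1 x3 h] assms(1,2) obtain M where
    M: "\<forall>x. x1 \<le> x \<and> x \<le> x3 \<longrightarrow> h x \<le> M" and "\<exists>x\<ge>x1. x \<le> x3 \<and> h x = M" by auto
  then obtain c0 where c0: "x1 \<le> c0" "c0 \<le> x3" "h c0 = M" by blast
  \<comment> \<open>if the maximum is only attained at an endpoint, it equals \<open>t\<close> and is attained at \<open>x2\<close> too\<close>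
  define c where "c = (if x1 < c0 \<and> c0 < x3 then c0 else x2)"
  have c: "x1 < c" "c < x3" using assms(1,2) unfolding c_def by auto
  have "h c = M"
  proof (cases "x1 < c0 \<and> c0 < x3")
    case False
    hence "c0 = x1 \<or> c0 = x3" using c0 by auto
    hence "M = t" using c0(3) assms(4,6) by auto
    moreover have "h x2 \<le> M" using M assms(1,2) by simp
    moreover have "c = x2" unfolding c_def by (rule if_not_P[OF False])
    ultimately show ?thesis using assms(5) by simp
  qed (use c0 c_def in simp)
  have "h' c = 0"
  proof (rule DERIV_local_max[OF deriv[of c]])
    show "0 < min (c - x1) (x3 - c)" using c by simp
    show "\<forall>y. \<bar>c - y\<bar> < min (c - x1) (x3 - c) \<longrightarrow> h y \<le> h c"
      using M c \<open>h c = M\<close> by (auto simp: abs_less_iff)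
  qed (use c in auto)
  moreover have "M \<ge> t" using M assms by force
  ultimately show ?thesis using c \<open>h c = M\<close> by auto
qed

lemma interior_critical_value_ge:
  fixes h h' :: "real \<Rightarrow> real"
  assumes "x1 < x2" "x2 < x3"
    and deriv: "\<And>x. x1 \<le> x \<Longrightarrow> x \<le> x3 \<Longrightarrow> (h has_real_derivative h' x) (at x)"
    and "h x1 = t" "h x2 = t" "h x3 = t"
  shows "\<exists>c. x1 < c \<and> c < x3 \<and> h' c = 0 \<and> \<bar>h c\<bar> \<ge> \<bar>t\<bar>"
proof (cases "t \<ge> 0")
  case True
  with interior_max_ge[OF assms] show ?thesis by force
next
  case False
  have "((\<lambda>x. - h x) has_real_derivative - h' x) (at x)" if "x1 \<le> x" "x \<le> x3" for x
    using DERIV_minus[OF deriv[OF that]] .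
  with interior_max_ge[of x1 x2 x3 "\<lambda>x. - h x" "\<lambda>x. - h' x" "- t"] assms
  obtain c where "x1 < c" "c < x3" "h' c = 0" "- h c \<ge> - t" by auto
  thus ?thesis using False by (intro exI[of _ c]) auto
qed

lemma three_of_same_sign:
  fixes X :: "real set"
  assumes "finite X" "0 \<notin> X" "card X \<ge> 5"
  obtains x1 x2 x3 where "x1 \<in> X" "x2 \<in> X" "x3 \<in> X" "x1 < x2" "x2 < x3" "0 < x1 \<or> x3 < 0"
proof -
  let ?pos = "{x\<in>X. 0 < x}" and ?neg = "{x\<in>X. x < 0}"
  have "X = ?pos \<union> ?neg"
  proof (intro equalityI subsetI)
    fix x assume "x \<in> X"
    moreover from this have "x \<noteq> 0" using assms(2) by auto
    ultimately show "x \<in> ?pos \<union> ?neg" by (auto simp: neq_iff)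
  qed auto
  hence "card X = card (?pos \<union> ?neg)" by (rule arg_cong)
  also have "\<dots> = card ?pos + card ?neg" using assms(1) by (intro card_Un_disjoint) auto
  finally have card_X: "card X = card ?pos + card ?neg" .
  define Y where "Y = (if card ?pos \<ge> 3 then ?pos else ?neg)"
  have Y: "Y \<subseteq> X" "card Y \<ge> 3" "(\<forall>y\<in>Y. 0 < y) \<or> (\<forall>y\<in>Y. y < 0)"
    using card_X assms(3) unfolding Y_def by auto
  have "finite Y" using Y(1) assms(1) finite_subset by blast
  have "Y \<noteq> {}" using Y(2) by auto
  define x1 x3 where "x1 = Min Y" and "x3 = Max Y"
  have "card {x1, x3} \<le> 2" by (cases "x1 = x3") auto
  moreover have "card Y - card {x1, x3} \<le> card (Y - {x1, x3})" by (rule diff_card_le_card_Diff) simp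
  ultimately have "card (Y - {x1, x3}) > 0" using Y(2) by linarith
  hence "Y - {x1, x3} \<noteq> {}" using card_gt_0_iff by blast
  then obtain x2 where x2: "x2 \<in> Y" "x2 \<noteq> x1" "x2 \<noteq> x3" by blast
  have "x1 \<in> Y" "x3 \<in> Y" "x1 \<le> x2" "x2 \<le> x3"
    unfolding x1_def x3_def using \<open>finite Y\<close> \<open>Y \<noteq> {}\<close> x2(1) by auto
  moreover from this have "x1 < x2" "x2 < x3" using x2 by auto
  moreover have "0 < x1 \<or> x3 < 0" using Y(3) \<open>x1 \<in> Y\<close> \<open>x3 \<in> Y\<close> by blast
  ultimately show ?thesis using that[of x1 x2 x3] Y(1) x2(1) by blast
qed

text \<open>A nonzero real \<open>x\<close> is a root of \<open>complete_poly d k a t\<close> iff \<open>root_param d k a x = t\<close>.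
  Between three such roots of equal sign, \<open>root_param d k a\<close> has a critical point with critical
  value at least \<open>\<bar>t\<bar>\<close>; the critical points are roots of \<open>crit_poly d k a\<close>.\<close>

definition root_param :: "nat \<Rightarrow> nat \<Rightarrow> (nat \<Rightarrow> rat) \<Rightarrow> real \<Rightarrow> real" where
  "root_param d k a x = - rpoly (complete_poly d k a 0) x / x ^ k"

definition crit_poly :: "nat \<Rightarrow> nat \<Rightarrow> (nat \<Rightarrow> rat) \<Rightarrow> rat poly" where
  "crit_poly d k a = smult (of_nat k) (complete_poly d k a 0) - pCons 0 (pderiv (complete_poly d k a 0))"

definition crit_bound :: "nat \<Rightarrow> nat \<Rightarrow> (nat \<Rightarrow> rat) \<Rightarrow> real" where
  "crit_bound d k a = (\<Sum>x\<in>{x::real. rpoly (crit_poly d k a) x = 0}. \<bar>root_param d k a x\<bar>)"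

lemma root_param_eq:
  assumes "x \<noteq> 0" "k \<le> d" "rpoly (complete_poly d k a t) x = 0"
  shows "root_param d k a x = of_rat t"
proof -
  have "rpoly (complete_poly d k a 0) x + of_rat t * x ^ k = 0"
    using assms(3) complete_poly_split[OF assms(2), of a t] by simp
  hence "- rpoly (complete_poly d k a 0) x = of_rat t * x ^ k" by simp
  thus ?thesis unfolding root_param_def using assms(1) by simp
qed

lemma has_real_derivative_root_param:
  assumes x: "x \<noteq> 0"
  shows "(root_param d k a has_real_derivative rpoly (crit_poly d k a) x / x ^ Suc k) (at x)"
proof -
  define G G' where "G = rpoly (complete_poly d k a 0) x" and "G' = rpoly (pderiv (complete_poly d k a 0)) x"
  have num: "((\<lambda>x. - rpoly (complete_poly d k a 0) x) has_real_derivative - G') (at x)"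
    unfolding G'_def by (rule DERIV_minus[OF has_real_derivative_rpoly])
  have den: "((\<lambda>x. x ^ k) has_real_derivative of_nat k * x ^ (k - 1)) (at x)"
    using DERIV_pow[of k x] by simp
  have "(root_param d k a has_real_derivative
      (- G' * x ^ k - - G * (of_nat k * x ^ (k - 1))) / (x ^ k * x ^ k)) (at x)"
    unfolding root_param_def[abs_def] G_def by (rule DERIV_divide[OF num den]) (use x in simp)
  moreover have "(- G' * x ^ k - - G * (of_nat k * x ^ (k - 1))) / (x ^ k * x ^ k)
      = (of_nat k * G - x * G') / x ^ Suc k"
  proof (cases k)
    case (Suc j)
    have "(- G' * x ^ k - - G * (of_nat k * x ^ (k - 1))) = x ^ j * (of_nat k * G - x * G')"
      unfolding Suc by (simp add: algebra_simps)
    moreover have "x ^ k * x ^ k = x ^ j * x ^ Suc k" unfolding Suc by (simp add: algebra_simps)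
    ultimately show ?thesis using x by simp
  qed (use x in simp)
  moreover have "rpoly (crit_poly d k a) x = of_nat k * G - x * G'"
    unfolding crit_poly_def G_def G'_def by simp
  ultimately show ?thesis by simp
qed

lemma crit_poly_nonzero:
  assumes "k \<le> d" "0 < d" "k \<noteq> 0 \<Longrightarrow> a 0 \<noteq> 0" "k \<noteq> d \<Longrightarrow> a d \<noteq> 0"
  shows "crit_poly d k a \<noteq> 0"
proof -
  have coeff: "coeff (crit_poly d k a) j = (of_nat k - of_nat j) * coeff (complete_poly d k a 0) j" for j
    unfolding crit_poly_def by (cases j) (auto simp: coeff_pderiv algebra_simps)
  show ?thesis
  proof (cases "k = d")
    case True
    hence "k \<noteq> 0" using assms(2) by simp
    hence "coeff (crit_poly d k a) 0 \<noteq> 0" using assms(3) by (simp add: coeff coeff_complete_poly)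
    thus ?thesis by auto
  next
    case False
    hence "coeff (crit_poly d k a) d \<noteq> 0" using assms by (simp add: coeff coeff_complete_poly)
    thus ?thesis by auto
  qed
qed

lemma critical_value_le_crit_bound:
  assumes "crit_poly d k a \<noteq> 0" and "rpoly (crit_poly d k a) c = 0"
  shows "\<bar>root_param d k a c\<bar> \<le> crit_bound d k a"
proof -
  have fin: "finite {x::real. rpoly (crit_poly d k a) x = 0}"
    unfolding rpoly_def by (rule poly_roots_finite) (use assms(1) in simp)
  show ?thesis unfolding crit_bound_def by (rule member_le_sum) (use fin assms(2) in auto)
qed

lemma complete_poly_nonreal_root:
  fixes a :: "nat \<Rightarrow> rat"
  assumes d: "5 \<le> d" and k: "k \<le> d" and a0: "k \<noteq> 0 \<Longrightarrow> a 0 \<noteq> 0" and ad: "k \<noteq> d \<Longrightarrow> a d \<noteq> 0"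
    and t: "t \<noteq> 0" and irr: "irreducible (complete_poly d k a t)"
    and large: "\<bar>real_of_rat t\<bar> > crit_bound d k a"
  shows "\<exists>z::complex. z \<notin> \<real> \<and> rpoly (complete_poly d k a t) z = 0"
proof (rule ccontr)
  let ?f = "complete_poly d k a t"
  assume "\<not> ?thesis"
  hence all_real: "z \<in> \<real>" if "rpoly ?f z = 0" for z :: complex using that by blast
  define X where "X = Re ` {z::complex. rpoly ?f z = 0}"
  have X_roots: "rpoly ?f x = 0" if "x \<in> X" for x
  proof -
    from that obtain z :: complex where z: "rpoly ?f z = 0" "x = Re z" unfolding X_def by blast
    hence "z = of_real x" using all_real[OF z(1)] by (simp add: complex_is_Real_iff complex_eq_iff)
    hence "(of_real (rpoly ?f x) :: complex) = 0" using z(1) by (simp add: of_real_rpoly)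
    thus ?thesis by simp
  qed
  have "inj_on Re {z::complex. rpoly ?f z = 0}"
  proof (rule inj_onI)
    fix z w :: complex assume "z \<in> {z. rpoly ?f z = 0}" "w \<in> {z. rpoly ?f z = 0}" "Re z = Re w"
    thus "z = w" using all_real by (simp add: complex_is_Real_iff complex_eq_iff)
  qed
  moreover have "degree ?f = d" using t ad by (intro degree_complete_poly) auto
  ultimately have card_X: "card X = d"
    unfolding X_def using card_roots_irreducible[OF irr] by (simp add: card_image)
  hence "finite X" using d by (intro card_ge_0_finite) simp
  moreover have "rpoly ?f (0::real) \<noteq> 0"
    using t a0 by (auto simp: rpoly_0_coeff coeff_complete_poly)
  hence "0 \<notin> X" using X_roots by blast
  moreover have "card X \<ge> 5" using card_X d by simp
  ultimately obtain x1 x2 x3 where x: "x1 \<in> X" "x2 \<in> X" "x3 \<in> X" "x1 < x2" "x2 < x3" "0 < x1 \<or> x3 < 0"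
    by (rule three_of_same_sign)
  hence nonzero: "x \<noteq> 0" if "x1 \<le> x" "x \<le> x3" for x using that by auto
  have "root_param d k a x = of_rat t" if "x \<in> X" for x
    using root_param_eq[OF _ k X_roots[OF that]] that \<open>0 \<notin> X\<close> by auto
  with interior_critical_value_ge[OF x(4,5) has_real_derivative_root_param[OF nonzero]] x(1-3)
  obtain c where c: "x1 < c" "c < x3" "rpoly (crit_poly d k a) c / c ^ Suc k = 0"
      "\<bar>root_param d k a c\<bar> \<ge> \<bar>of_rat t\<bar>"
    by blast
  hence "rpoly (crit_poly d k a) c = 0" using nonzero[of c] by simp
  hence "\<bar>root_param d k a c\<bar> \<le> crit_bound d k a"
    using critical_value_le_crit_bound crit_poly_nonzero[OF k _ a0 ad] d by simp
  thus False using c(4) large by simp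
qed

section \<open>Irreducibility of the completed polynomial\<close>

lemma dvd_coeff_mult_lowest:
  fixes G H :: "'a::comm_ring_1 poly"
  assumes G: "\<And>i. i < m \<Longrightarrow> p dvd coeff G i" and H: "\<And>j. j < n \<Longrightarrow> p dvd coeff H j"
  shows "p dvd coeff (G * H) (m + n) - coeff G m * coeff H n"
proof -
  let ?n = "m + n"
  have "coeff (G * H) ?n = (\<Sum>i\<le>?n. coeff G i * coeff H (?n - i))" by (rule coeff_mult)
  also have "\<dots> = coeff G m * coeff H (?n - m) + (\<Sum>i\<in>{..?n} - {m}. coeff G i * coeff H (?n - i))"
    by (rule sum.remove) auto
  finally have eq: "coeff (G * H) ?n = coeff G m * coeff H n + (\<Sum>i\<in>{..?n} - {m}. coeff G i * coeff H (?n - i))"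
    by simp
  have "p dvd (\<Sum>i\<in>{..?n} - {m}. coeff G i * coeff H (?n - i))"
  proof (rule dvd_sum)
    fix i assume i: "i \<in> {..?n} - {m}"
    show "p dvd coeff G i * coeff H (?n - i)"
    proof (cases "i < m")
      case True thus ?thesis using G by (simp add: dvd_mult2)
    next
      case False
      hence "?n - i < n" using i by auto
      thus ?thesis using H by (simp add: dvd_mult)
    qed
  qed
  thus ?thesis using eq by simp
qed

lemma dvd_coeff_mult_highest:
  fixes G H :: "'a::comm_ring_1 poly"
  assumes G: "\<And>i. i > m \<Longrightarrow> p dvd coeff G i" and H: "\<And>j. j > n \<Longrightarrow> p dvd coeff H j"
  shows "p dvd coeff (G * H) (m + n) - coeff G m * coeff H n"
proof -
  let ?n = "m + n"
  have "coeff (G * H) ?n = (\<Sum>i\<le>?n. coeff G i * coeff H (?n - i))" by (rule coeff_mult)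
  also have "\<dots> = coeff G m * coeff H (?n - m) + (\<Sum>i\<in>{..?n} - {m}. coeff G i * coeff H (?n - i))"
    by (rule sum.remove) auto
  finally have eq: "coeff (G * H) ?n = coeff G m * coeff H n + (\<Sum>i\<in>{..?n} - {m}. coeff G i * coeff H (?n - i))"
    by simp
  have "p dvd (\<Sum>i\<in>{..?n} - {m}. coeff G i * coeff H (?n - i))"
  proof (rule dvd_sum)
    fix i assume i: "i \<in> {..?n} - {m}"
    show "p dvd coeff G i * coeff H (?n - i)"
    proof (cases "i > m")
      case True thus ?thesis using G by (simp add: dvd_mult2)
    next
      case False
      hence "?n - i > n" using i by auto
      thus ?thesis using H by (simp add: dvd_mult)
    qed
  qed
  thus ?thesis using eq by simp
qed

lemma extreme_coeffs_not_dvd: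
  fixes G :: "'a::comm_semiring_1 poly"
  assumes "\<not> p dvd coeff G i"
  obtains lo hi where "\<not> p dvd coeff G lo" "\<not> p dvd coeff G hi" "lo \<le> hi"
    "\<And>i. i < lo \<Longrightarrow> p dvd coeff G i" "\<And>i. hi < i \<Longrightarrow> p dvd coeff G i"
proof -
  define I where "I = {i. \<not> p dvd coeff G i}"
  have "I \<subseteq> {..degree G}"
  proof
    fix j assume "j \<in> I"
    hence "coeff G j \<noteq> 0" unfolding I_def by auto
    thus "j \<in> {..degree G}" by (simp add: le_degree)
  qed
  hence fin: "finite I" by (rule finite_subset) simp
  have ne: "I \<noteq> {}" using assms unfolding I_def by auto
  have lo: "Min I \<in> I" by (rule Min_in[OF fin ne])
  have hi: "Max I \<in> I" by (rule Max_in[OF fin ne])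
  have "Min I \<le> Max I" by (rule Min_le[OF fin hi])
  moreover have "p dvd coeff G j" if "j < Min I" for j
  proof (rule ccontr)
    assume "\<not> p dvd coeff G j"
    hence "Min I \<le> j" using Min_le[OF fin] unfolding I_def by blast
    thus False using that by simp
  qed
  moreover have "p dvd coeff G j" if "Max I < j" for j
  proof (rule ccontr)
    assume "\<not> p dvd coeff G j"
    hence "j \<le> Max I" using Max_ge[OF fin] unfolding I_def by blast
    thus False using that by simp
  qed
  ultimately show ?thesis using that[of "Min I" "Max I"] lo hi unfolding I_def by blast
qed

lemma factors_monomial_mod_prime:
  fixes G H :: "int poly"
  assumes p: "prime p"
    and others: "\<And>i. i \<noteq> k \<Longrightarrow> p dvd coeff (G * H) i" and "\<not> p dvd coeff (G * H) k"
  obtains i0 j0 where "i0 + j0 = k"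
    "\<And>i. \<not> p dvd coeff G i \<longleftrightarrow> i = i0" "\<And>j. \<not> p dvd coeff H j \<longleftrightarrow> j = j0"
proof -
  have some_not_dvd: "\<exists>i. \<not> p dvd coeff G i" "\<exists>j. \<not> p dvd coeff H j"
  proof (rule_tac [!] ccontr)
    assume "\<nexists>i. \<not> p dvd coeff G i"
    hence "p dvd coeff (G * H) k" unfolding coeff_mult by (auto intro!: dvd_sum)
    thus False using assms(3) by blast
  next
    assume "\<nexists>j. \<not> p dvd coeff H j"
    hence "p dvd coeff (G * H) k" unfolding coeff_mult by (auto intro!: dvd_sum)
    thus False using assms(3) by blast
  qed
  obtain i0 i1 where i: "\<not> p dvd coeff G i0" "\<not> p dvd coeff G i1" "i0 \<le> i1"
    "\<And>i. i < i0 \<Longrightarrow> p dvd coeff G i" "\<And>i. i1 < i \<Longrightarrow> p dvd coeff G i"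
    using some_not_dvd(1) extreme_coeffs_not_dvd by blast
  obtain j0 j1 where j: "\<not> p dvd coeff H j0" "\<not> p dvd coeff H j1" "j0 \<le> j1"
    "\<And>j. j < j0 \<Longrightarrow> p dvd coeff H j" "\<And>j. j1 < j \<Longrightarrow> p dvd coeff H j"
    using some_not_dvd(2) extreme_coeffs_not_dvd by blast
  have not_dvd: "\<not> p dvd coeff G i * coeff H j" if "\<not> p dvd coeff G i" "\<not> p dvd coeff H j" for i j
    using that p by (simp add: prime_dvd_mult_iff)
  have "i0 + j0 = k"
  proof (rule ccontr)
    assume "i0 + j0 \<noteq> k"
    hence "p dvd coeff (G * H) (i0 + j0)" by (rule others)
    from dvd_diff[OF this dvd_coeff_mult_lowest[where G = G and H = H and m = i0 and n = j0, OF i(4) j(4)]]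
    have "p dvd coeff G i0 * coeff H j0" by simp
    thus False using not_dvd i(1) j(1) by blast
  qed
  moreover have "i1 + j1 = k"
  proof (rule ccontr)
    assume "i1 + j1 \<noteq> k"
    hence "p dvd coeff (G * H) (i1 + j1)" by (rule others)
    from dvd_diff[OF this dvd_coeff_mult_highest[where G = G and H = H and m = i1 and n = j1, OF i(5) j(5)]]
    have "p dvd coeff G i1 * coeff H j1" by simp
    thus False using not_dvd i(2) j(2) by blast
  qed
  ultimately have "i1 = i0" "j1 = j0" using i(3) j(3) by linarith+
  hence "\<not> p dvd coeff G i \<longleftrightarrow> i = i0" "\<not> p dvd coeff H j \<longleftrightarrow> j = j0" for i j
    using i(1) j(1) i(4,5)[of i] j(4,5)[of j] by (cases i i0 rule: linorder_cases;
        cases j j0 rule: linorder_cases; auto)+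
  thus ?thesis using that \<open>i0 + j0 = k\<close> by blast
qed

lemma degree_factor_mod_prime:
  fixes G H :: "int poly"
  assumes p: "prime p" and "degree G > 0"
    and G: "\<And>i. \<not> p dvd coeff G i \<longleftrightarrow> i = i0" and H: "\<And>j. \<not> p dvd coeff H j \<longleftrightarrow> j = j0"
    and "\<not> p dvd lead_coeff G" and "\<not> p ^ 2 dvd coeff G 0 * coeff H 0"
  shows "degree G = i0 + j0"
proof -
  have "degree G = i0" using G assms(5) by blast
  hence "p dvd coeff G 0" using G[of 0] assms(2) by auto
  hence "\<not> p dvd coeff H 0" using assms(6) by (auto simp: power2_eq_square mult_dvd_mono)
  thus ?thesis using H \<open>degree G = i0\<close> by auto
qed

text \<open>A version of the Eisenstein--Dumas criterion: a factorisation is only possible if the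
  Newton polygon at \<open>p\<close>, which has vertices \<open>(0,1)\<close>, \<open>(k,0)\<close>, \<open>(d,1)\<close>, splits into its two edges.\<close>

lemma factor_degrees_mod_prime:
  fixes G H :: "int poly"
  assumes p: "prime p" and F: "F = G * H" "degree F = d"
    and others: "\<And>i. i \<noteq> k \<Longrightarrow> p dvd coeff F i" and "\<not> p dvd coeff F k"
    and F0: "k \<noteq> 0 \<Longrightarrow> \<not> p ^ 2 dvd coeff F 0" and Fd: "k \<noteq> d \<Longrightarrow> \<not> p ^ 2 dvd coeff F d"
    and "degree G > 0" "degree H > 0"
  shows "0 < k" "k < d" "degree G = k \<or> degree G = d - k"
proof -
  obtain i0 j0 where k: "i0 + j0 = k"
    and G: "\<And>i. \<not> p dvd coeff G i \<longleftrightarrow> i = i0" and H: "\<And>j. \<not> p dvd coeff H j \<longleftrightarrow> j = j0"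
    using factors_monomial_mod_prime[OF p, where G = G and H = H and k = k] assms(4,5) unfolding F(1) by blast
  have "G \<noteq> 0" "H \<noteq> 0" using assms(8,9) by auto
  hence deg: "degree G + degree H = d" using F degree_mult_eq[OF \<open>G \<noteq> 0\<close> \<open>H \<noteq> 0\<close>] by simp
  have square_dvd: "p ^ 2 dvd x * y" if "p dvd x" "p dvd y" for x y :: int
    using that by (simp add: power2_eq_square mult_dvd_mono)
  have "coeff F d = lead_coeff F" using F(2) by simp
  hence lead: "coeff F d = lead_coeff G * lead_coeff H" unfolding F(1) by (simp add: lead_coeff_mult)
  have lc: "\<not> p dvd lead_coeff G \<or> \<not> p dvd lead_coeff H"
  proof (cases "k = d")
    case True
    thus ?thesis using assms(5) lead by (auto simp: dvd_mult2)
  next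
    case False
    thus ?thesis using Fd lead square_dvd by auto
  qed
  have sq: "\<not> p ^ 2 dvd coeff G 0 * coeff H 0"
  proof (cases "k = 0")
    case True
    hence "\<not> p dvd coeff G 0 * coeff H 0" using G H k p by (simp add: prime_dvd_mult_iff)
    thus ?thesis using dvd_trans[of p "p ^ 2"] by (auto simp: power2_eq_square)
  next
    case False
    thus ?thesis using F0 F(1) by (simp add: coeff_mult_0)
  qed
  have "degree G = k \<or> degree H = k"
  proof (cases "p dvd lead_coeff G")
    case False
    thus ?thesis using degree_factor_mod_prime[OF p assms(8) G H False sq] k by simp
  next
    case True
    hence "\<not> p dvd lead_coeff H" using lc by blast
    moreover have "\<not> p ^ 2 dvd coeff H 0 * coeff G 0" using sq by (simp add: mult.commute)
    ultimately show ?thesis using degree_factor_mod_prime[OF p assms(9) H G] k by simp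
  qed
  thus "0 < k" "k < d" "degree G = k \<or> degree G = d - k" using deg assms(8,9) by auto
qed

definition coeff_norm :: "nat \<Rightarrow> (nat \<Rightarrow> rat) \<Rightarrow> real" where
  "coeff_norm d a = 1 + (\<Sum>i\<le>d. \<bar>real_of_rat (a i)\<bar>)"

lemma coeff_norm_ge_sum: "I \<subseteq> {..d} \<Longrightarrow> (\<Sum>i\<in>I. \<bar>real_of_rat (a i)\<bar>) \<le> coeff_norm d a"
  unfolding coeff_norm_def using sum_mono2[of "{..d}" I "\<lambda>i. \<bar>real_of_rat (a i)\<bar>"] by simp

lemma coeff_norm_ge_1: "1 \<le> coeff_norm d a"
  unfolding coeff_norm_def by (simp add: sum_nonneg)

lemma cmod_of_rat: "cmod (of_rat r) = \<bar>real_of_rat r\<bar>"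
  by (metis norm_of_real of_real_of_rat_eq)

lemma norm_sum_rat_le:
  fixes z :: complex
  assumes "\<And>i. i \<in> I \<Longrightarrow> cmod z ^ i \<le> B"
  shows "cmod (\<Sum>i\<in>I. of_rat (a i) * z ^ i) \<le> (\<Sum>i\<in>I. \<bar>real_of_rat (a i)\<bar>) * B"
proof -
  have "cmod (\<Sum>i\<in>I. of_rat (a i) * z ^ i) \<le> (\<Sum>i\<in>I. \<bar>real_of_rat (a i)\<bar> * cmod z ^ i)"
    using norm_sum[of "\<lambda>i. of_rat (a i) * z ^ i" I] by (simp add: norm_mult norm_power cmod_of_rat)
  also have "\<dots> \<le> (\<Sum>i\<in>I. \<bar>real_of_rat (a i)\<bar> * B)"
    by (rule sum_mono) (simp add: assms mult_left_mono)
  finally show ?thesis by (simp add: sum_distrib_right)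
qed

lemma root_eq_sum:
  assumes "k \<le> d" and "rpoly (complete_poly d k a t) z = 0"
  shows "\<bar>real_of_rat t\<bar> * cmod z ^ k = cmod (\<Sum>i\<in>{..d}-{k}. of_rat (a i) * (z::complex) ^ i)"
proof -
  have "of_rat t * z ^ k = - (\<Sum>i\<in>{..d}-{k}. of_rat (a i) * z ^ i)"
    using assms rpoly_complete_poly[OF assms(1), of a t z] by (simp add: add_eq_0_iff)
  hence "cmod (of_rat t * z ^ k) = cmod (\<Sum>i\<in>{..d}-{k}. of_rat (a i) * z ^ i)"
    by (metis norm_minus_cancel)
  thus ?thesis by (simp add: norm_mult norm_power cmod_of_rat)
qed

text \<open>For large \<open>\<bar>t\<bar> = u\<close>, the roots of \<open>complete_poly d k a t\<close> inside the unit disc satisfy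
  \<open>\<bar>z\<bar>\<^sup>k \<approx> 1/u\<close>, those outside satisfy \<open>\<bar>z\<bar>\<^sup>d\<^sup>-\<^sup>k \<approx> u\<close>.\<close>

lemma small_root_bounds:
  fixes z :: complex
  assumes k: "0 < k" "k \<le> d" and a0: "a 0 \<noteq> 0"
    and root: "rpoly (complete_poly d k a t) z = 0" and small: "cmod z \<le> 1"
    and large: "\<bar>real_of_rat t\<bar> \<ge> coeff_norm d a * (2 * coeff_norm d a / \<bar>real_of_rat (a 0)\<bar>) ^ k"
  shows "\<bar>real_of_rat (a 0)\<bar> / (2 * \<bar>real_of_rat t\<bar>) \<le> cmod z ^ k"
    and "cmod z ^ k \<le> coeff_norm d a / \<bar>real_of_rat t\<bar>"
proof -
  define S A0 u w where "S = coeff_norm d a" and "A0 = \<bar>real_of_rat (a 0)\<bar>"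
    and "u = \<bar>real_of_rat t\<bar>" and "w = cmod z"
  define g where "g = (\<Sum>i\<in>{..d}-{k}. of_rat (a i) * z ^ i)"
  have A0: "A0 > 0" using a0 unfolding A0_def by simp
  have S: "S \<ge> 1" unfolding S_def by (rule coeff_norm_ge_1)
  have "0 < S * (2 * S / A0) ^ k" using A0 S by simp
  hence u: "u > 0" using large unfolding S_def A0_def u_def by linarith
  have ug: "u * w ^ k = cmod g" unfolding u_def w_def g_def by (rule root_eq_sum[OF k(2) root])
  have "cmod g \<le> (\<Sum>i\<in>{..d}-{k}. \<bar>real_of_rat (a i)\<bar>) * 1"
    unfolding g_def by (rule norm_sum_rat_le) (use small in \<open>simp add: power_le_one\<close>)
  also have "\<dots> \<le> S" unfolding S_def mult_1_right by (rule coeff_norm_ge_sum) auto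
  finally have "u * w ^ k \<le> S" using ug by simp
  hence upper: "w ^ k \<le> S / u" using u by (simp add: field_simps)
  also have "S / u \<le> S / (S * (2 * S / A0) ^ k)"
    using large u S A0 unfolding S_def A0_def u_def by (intro divide_left_mono) auto
  also have "\<dots> = (A0 / (2 * S)) ^ k" using S A0 by (simp add: power_divide field_simps)
  finally have "w ^ k \<le> (A0 / (2 * S)) ^ k" .
  moreover obtain k' where "k = Suc k'" using k(1) by (cases k) auto
  ultimately have "w ^ Suc k' \<le> (A0 / (2 * S)) ^ Suc k'" by simp
  hence w: "w \<le> A0 / (2 * S)" by (rule power_le_imp_le_base) (use A0 S in simp)
  define r where "r = (\<Sum>i\<in>{..d}-{k}-{0}. of_rat (a i) * z ^ i)"
  have g0: "g = of_rat (a 0) + r"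
    unfolding g_def r_def using k by (subst sum.remove[of _ 0]) auto
  have "cmod r \<le> (\<Sum>i\<in>{..d}-{k}-{0}. \<bar>real_of_rat (a i)\<bar>) * w"
    unfolding r_def w_def
  proof (rule norm_sum_rat_le)
    fix i assume "i \<in> {..d}-{k}-{0}"
    hence "1 \<le> i" by auto
    thus "cmod z ^ i \<le> cmod z" using power_decreasing[of 1 i "cmod z"] small by simp
  qed
  also have "\<dots> \<le> S * w" unfolding S_def by (intro mult_right_mono coeff_norm_ge_sum) (auto simp: w_def)
  also have "\<dots> \<le> A0 / 2" using w S by (simp add: field_simps)
  finally have "cmod r \<le> A0 / 2" .
  moreover have "A0 \<le> cmod g + cmod r"
    using norm_triangle_ineq4[of g r] g0 unfolding A0_def by (simp add: cmod_of_rat)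
  ultimately have "A0 / 2 \<le> u * w ^ k" using ug by simp
  hence "A0 / (2 * u) \<le> w ^ k" using u by (simp add: field_simps)
  thus "\<bar>real_of_rat (a 0)\<bar> / (2 * \<bar>real_of_rat t\<bar>) \<le> cmod z ^ k" unfolding A0_def u_def w_def .
  show "cmod z ^ k \<le> coeff_norm d a / \<bar>real_of_rat t\<bar>" using upper unfolding S_def u_def w_def .
qed

lemma large_root_bounds:
  fixes z :: complex
  assumes k: "k < d" and ad: "a d \<noteq> 0"
    and root: "rpoly (complete_poly d k a t) z = 0" and large_z: "cmod z > 1"
    and large: "\<bar>real_of_rat t\<bar> \<ge> coeff_norm d a * (2 * coeff_norm d a / \<bar>real_of_rat (a d)\<bar>) ^ (d - k)"
  shows "\<bar>real_of_rat t\<bar> / coeff_norm d a \<le> cmod z ^ (d - k)"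
    and "cmod z ^ (d - k) \<le> 2 * \<bar>real_of_rat t\<bar> / \<bar>real_of_rat (a d)\<bar>"
proof -
  define S Ad u w where "S = coeff_norm d a" and "Ad = \<bar>real_of_rat (a d)\<bar>"
    and "u = \<bar>real_of_rat t\<bar>" and "w = cmod z"
  define g where "g = (\<Sum>i\<in>{..d}-{k}. of_rat (a i) * z ^ i)"
  have Ad: "Ad > 0" using ad unfolding Ad_def by simp
  have S: "S \<ge> 1" unfolding S_def by (rule coeff_norm_ge_1)
  have w: "w > 1" using large_z unfolding w_def .
  have ug: "u * w ^ k = cmod g" unfolding u_def w_def g_def by (rule root_eq_sum) (use k root in auto)
  have "cmod g \<le> (\<Sum>i\<in>{..d}-{k}. \<bar>real_of_rat (a i)\<bar>) * w ^ d"
    unfolding g_def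
  proof (rule norm_sum_rat_le)
    fix i assume "i \<in> {..d}-{k}"
    thus "cmod z ^ i \<le> w ^ d" using w unfolding w_def by (simp add: power_increasing)
  qed
  also have "\<dots> \<le> S * w ^ d" unfolding S_def using w by (intro mult_right_mono coeff_norm_ge_sum) auto
  finally have "u * w ^ k \<le> S * (w ^ k * w ^ (d - k))" using ug k by (simp flip: power_add)
  hence "u \<le> S * w ^ (d - k)" using w by (simp add: mult.left_commute)
  hence lower: "u / S \<le> w ^ (d - k)" using S by (simp add: field_simps)
  have "(2 * S / Ad) ^ (d - k) \<le> u / S" using large S unfolding S_def Ad_def u_def by (simp add: field_simps)
  hence "(2 * S / Ad) ^ (d - k) \<le> w ^ (d - k)" using lower by simp
  moreover obtain e where "d - k = Suc e" using k by (cases "d - k") auto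
  ultimately have "(2 * S / Ad) ^ Suc e \<le> w ^ Suc e" by simp
  hence w_large: "2 * S / Ad \<le> w" by (rule power_le_imp_le_base) (use w in simp)
  define r where "r = (\<Sum>i\<in>{..d}-{k}-{d}. of_rat (a i) * z ^ i)"
  have "g = of_rat (a d) * z ^ d + r"
    unfolding g_def r_def using k by (subst sum.remove[of _ d]) auto
  moreover have "of_rat t * z ^ k = - g"
    using root rpoly_complete_poly[of k d a t z] k unfolding g_def by (simp add: add_eq_0_iff)
  ultimately have "of_rat (a d) * z ^ d = - (of_rat t * z ^ k + r)" by (simp add: algebra_simps)
  hence "Ad * w ^ d = cmod (of_rat t * z ^ k + r)"
    unfolding Ad_def w_def by (metis cmod_of_rat norm_minus_cancel norm_mult norm_power)
  also have "\<dots> \<le> u * w ^ k + cmod r"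
    using norm_triangle_ineq[of "of_rat t * z ^ k" r]
    unfolding u_def w_def by (simp add: norm_mult norm_power cmod_of_rat)
  also have "cmod r \<le> (\<Sum>i\<in>{..d}-{k}-{d}. \<bar>real_of_rat (a i)\<bar>) * w ^ (d - 1)"
    unfolding r_def
  proof (rule norm_sum_rat_le)
    fix i assume "i \<in> {..d}-{k}-{d}"
    hence "i \<le> d - 1" by auto
    thus "cmod z ^ i \<le> w ^ (d - 1)" using w unfolding w_def by (simp add: power_increasing)
  qed
  also have "\<dots> \<le> S * w ^ (d - 1)" unfolding S_def
    using w by (intro mult_right_mono coeff_norm_ge_sum) auto
  also have "S * w ^ (d - 1) \<le> Ad * w ^ d / 2"
  proof -
    have "2 * S \<le> Ad * w" using w_large Ad by (simp add: field_simps)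
    hence "2 * S * w ^ (d - 1) \<le> Ad * w * w ^ (d - 1)" using w by (intro mult_right_mono) auto
    moreover have "w * w ^ (d - 1) = w ^ d" using k by (metis Suc_diff_1 not_gr0 not_less0 power_Suc)
    ultimately show ?thesis by (simp add: field_simps)
  qed
  finally have "Ad * (w ^ k * w ^ (d - k)) / 2 \<le> u * w ^ k" using k by (simp flip: power_add)
  hence "Ad * w ^ (d - k) / 2 \<le> u" using w by (simp add: field_simps)
  hence "w ^ (d - k) \<le> 2 * u / Ad" using Ad by (simp add: field_simps)
  thus "cmod z ^ (d - k) \<le> 2 * \<bar>real_of_rat t\<bar> / \<bar>real_of_rat (a d)\<bar>" unfolding Ad_def u_def w_def .
  show "\<bar>real_of_rat t\<bar> / coeff_norm d a \<le> cmod z ^ (d - k)" using lower unfolding S_def u_def w_def .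
qed

lemma root_power_bounds:
  assumes k: "0 < k" "k < d" and a0: "a 0 \<noteq> 0" and ad: "a d \<noteq> 0"
  obtains c C T where "0 < c" "c \<le> 1" "1 \<le> C"
    "\<And>t (z::complex). \<bar>real_of_rat t\<bar> \<ge> T \<Longrightarrow> rpoly (complete_poly d k a t) z = 0 \<Longrightarrow>
       (c \<le> cmod z ^ (k * (d - k)) * \<bar>real_of_rat t\<bar> ^ (d - k)
          \<and> cmod z ^ (k * (d - k)) * \<bar>real_of_rat t\<bar> ^ (d - k) \<le> C)
     \<or> (c * \<bar>real_of_rat t\<bar> ^ k \<le> cmod z ^ (k * (d - k))
          \<and> cmod z ^ (k * (d - k)) \<le> C * \<bar>real_of_rat t\<bar> ^ k)"
proof -
  define S A0 Ad where "S = coeff_norm d a" and "A0 = \<bar>real_of_rat (a 0)\<bar>" and "Ad = \<bar>real_of_rat (a d)\<bar>"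
  define T where "T = max 1 (max (S * (2 * S / A0) ^ k) (S * (2 * S / Ad) ^ (d - k)))"
  define c where "c = min (min ((A0 / 2) ^ (d - k)) (1 / S ^ k)) 1"
  define C where "C = max (max (S ^ (d - k)) ((2 / Ad) ^ k)) 1"
  have A0: "A0 > 0" and Ad: "Ad > 0" using a0 ad unfolding A0_def Ad_def by simp_all
  have S: "S \<ge> 1" unfolding S_def by (rule coeff_norm_ge_1)
  show ?thesis
  proof (rule that[of c C T])
    show "0 < c" "c \<le> 1" "1 \<le> C" unfolding c_def C_def using A0 S by auto
    fix t and z :: complex
    assume large: "\<bar>real_of_rat t\<bar> \<ge> T" and root: "rpoly (complete_poly d k a t) z = 0"
    define u w m where "u = \<bar>real_of_rat t\<bar>" and "w = cmod z" and "m = k * (d - k)"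
    have u: "u \<ge> 1" using large unfolding T_def u_def by simp
    have w: "w \<ge> 0" unfolding w_def by simp
    have "(c \<le> w ^ m * u ^ (d - k) \<and> w ^ m * u ^ (d - k) \<le> C) \<or> (c * u ^ k \<le> w ^ m \<and> w ^ m \<le> C * u ^ k)"
    proof (cases "w \<le> 1")
      case True
      have "A0 / (2 * u) \<le> w ^ k" "w ^ k \<le> S / u"
        using small_root_bounds[OF k(1) less_imp_le[OF k(2)] a0 root] True large
        unfolding A0_def S_def u_def w_def T_def by auto
      note bounds = this
      have lo: "(A0 / (2 * u)) ^ (d - k) \<le> w ^ m"
        unfolding m_def power_mult by (rule power_mono) (use bounds A0 u in auto)
      have hi: "w ^ m \<le> (S / u) ^ (d - k)"
        unfolding m_def power_mult by (rule power_mono) (use bounds w in auto)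
      have "c \<le> (A0 / 2) ^ (d - k)" unfolding c_def by simp
      also have "(A0 / 2) ^ (d - k) = (A0 / (2 * u) * u) ^ (d - k)" using u by simp
      also have "\<dots> \<le> w ^ m * u ^ (d - k)"
        unfolding power_mult_distrib using lo u by (intro mult_right_mono) auto
      finally have "c \<le> w ^ m * u ^ (d - k)" .
      moreover have "w ^ m * u ^ (d - k) \<le> (S / u) ^ (d - k) * u ^ (d - k)"
        using hi u by (intro mult_right_mono) auto
      moreover have "(S / u) ^ (d - k) * u ^ (d - k) = (S / u * u) ^ (d - k)"
        by (rule power_mult_distrib[symmetric])
      moreover have "S / u * u = S" using u by simp
      moreover have "S ^ (d - k) \<le> C" unfolding C_def by simp
      ultimately show ?thesis by auto
    next
      case False
      have "u / S \<le> w ^ (d - k)" "w ^ (d - k) \<le> 2 * u / Ad"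
        using large_root_bounds[OF k(2) ad root] False large
        unfolding Ad_def S_def u_def w_def T_def by auto
      note bounds = this
      have w_m: "w ^ m = (w ^ (d - k)) ^ k" unfolding m_def by (simp add: power_mult[symmetric] mult.commute)
      have lo: "(u / S) ^ k \<le> w ^ m" unfolding w_m by (rule power_mono) (use bounds S u in auto)
      have hi: "w ^ m \<le> (2 * u / Ad) ^ k" unfolding w_m by (rule power_mono) (use bounds w in auto)
      have "c * u ^ k \<le> (1 / S ^ k) * u ^ k" unfolding c_def using u by (intro mult_right_mono) auto
      also have "\<dots> = (u / S) ^ k" by (simp add: power_divide)
      finally have "c * u ^ k \<le> w ^ m" using lo by simp
      moreover have "w ^ m \<le> C * u ^ k"
      proof -
        have "(2 * u / Ad) ^ k = (2 / Ad) ^ k * u ^ k" by (simp add: power_divide power_mult_distrib)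
        moreover have "(2 / Ad) ^ k \<le> C" unfolding C_def by simp
        ultimately show ?thesis using hi u by (simp add: mult_right_mono order_trans)
      qed
      ultimately show ?thesis by auto
    qed
    thus "(c \<le> cmod z ^ (k * (d - k)) * \<bar>real_of_rat t\<bar> ^ (d - k)
          \<and> cmod z ^ (k * (d - k)) * \<bar>real_of_rat t\<bar> ^ (d - k) \<le> C)
     \<or> (c * \<bar>real_of_rat t\<bar> ^ k \<le> cmod z ^ (k * (d - k))
          \<and> cmod z ^ (k * (d - k)) \<le> C * \<bar>real_of_rat t\<bar> ^ k)"
      unfolding u_def w_def m_def .
  qed
qed

lemma prod_list_two_scale_bounds:
  fixes y :: "'b \<Rightarrow> real"
  assumes "0 < c" "1 \<le> C" "0 < u"
    and "\<forall>z\<in>set zs. 0 \<le> y z \<and>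
      ((c \<le> y z * u ^ e \<and> y z * u ^ e \<le> C) \<or> (c * u ^ f \<le> y z \<and> y z \<le> C * u ^ f))"
  shows "\<exists>s l. s + l = length zs \<and> c ^ length zs * u ^ (f * l) \<le> (\<Prod>z\<leftarrow>zs. y z) * u ^ (e * s)
           \<and> (\<Prod>z\<leftarrow>zs. y z) * u ^ (e * s) \<le> C ^ length zs * u ^ (f * l)"
  using assms(4)
proof (induction zs)
  case Nil
  show ?case by simp
next
  case (Cons z zs)
  then obtain s l where sl: "s + l = length zs"
    and lo: "c ^ length zs * u ^ (f * l) \<le> (\<Prod>z\<leftarrow>zs. y z) * u ^ (e * s)"
    and hi: "(\<Prod>z\<leftarrow>zs. y z) * u ^ (e * s) \<le> C ^ length zs * u ^ (f * l)" by auto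
  have y: "0 \<le> y z" "0 \<le> (\<Prod>z\<leftarrow>zs. y z)" using Cons.prems by (auto intro!: prod_list_nonneg)
  have pos: "0 \<le> c ^ length zs * u ^ (f * l)" using assms(1,3) by simp
  from Cons.prems consider "c \<le> y z * u ^ e" "y z * u ^ e \<le> C" | "c * u ^ f \<le> y z" "y z \<le> C * u ^ f"
    by auto
  thus ?case
  proof cases
    case 1
    have eq: "(\<Prod>z\<leftarrow>z # zs. y z) * u ^ (e * Suc s) = (y z * u ^ e) * ((\<Prod>z\<leftarrow>zs. y z) * u ^ (e * s))"
      by (simp add: power_add mult_ac)
    have "c ^ length (z # zs) * u ^ (f * l) = c * (c ^ length zs * u ^ (f * l))" by simp
    also have "\<dots> \<le> (\<Prod>z\<leftarrow>z # zs. y z) * u ^ (e * Suc s)"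
      unfolding eq by (rule mult_mono) (use 1 lo pos assms(1,3) y in auto)
    finally have "c ^ length (z # zs) * u ^ (f * l) \<le> (\<Prod>z\<leftarrow>z # zs. y z) * u ^ (e * Suc s)" .
    moreover have "(\<Prod>z\<leftarrow>z # zs. y z) * u ^ (e * Suc s) \<le> C * (C ^ length zs * u ^ (f * l))"
      unfolding eq by (rule mult_mono) (use 1 hi y assms(2,3) in auto)
    moreover have "C * (C ^ length zs * u ^ (f * l)) = C ^ length (z # zs) * u ^ (f * l)" by simp
    ultimately show ?thesis using sl by (intro exI[of _ "Suc s"] exI[of _ l]) simp
  next
    case 2
    have eq: "(\<Prod>z\<leftarrow>z # zs. y z) * u ^ (e * s) = y z * ((\<Prod>z\<leftarrow>zs. y z) * u ^ (e * s))"
      by (simp add: mult_ac)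
    have "c ^ length (z # zs) * u ^ (f * Suc l) = (c * u ^ f) * (c ^ length zs * u ^ (f * l))"
      by (simp add: power_add mult_ac)
    also have "\<dots> \<le> (\<Prod>z\<leftarrow>z # zs. y z) * u ^ (e * s)"
      unfolding eq by (rule mult_mono) (use 2 lo pos y assms(1,3) in auto)
    finally have "c ^ length (z # zs) * u ^ (f * Suc l) \<le> (\<Prod>z\<leftarrow>z # zs. y z) * u ^ (e * s)" .
    moreover have "(\<Prod>z\<leftarrow>z # zs. y z) * u ^ (e * s) \<le> (C * u ^ f) * (C ^ length zs * u ^ (f * l))"
      unfolding eq by (rule mult_mono) (use 2 hi y assms(2,3) in auto)
    moreover have "(C * u ^ f) * (C ^ length zs * u ^ (f * l)) = C ^ length (z # zs) * u ^ (f * Suc l)"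
      by (simp add: power_add mult_ac)
    ultimately show ?thesis using sl by (intro exI[of _ s] exI[of _ "Suc l"]) simp
  qed
qed

lemma power_scale_exponents_eq:
  fixes u P c C L :: real
  assumes u: "1 \<le> u" and c: "0 < c" "c \<le> 1" and C: "1 \<le> C" and L: "0 < L" "L \<le> P" "P \<le> 1 / L"
    and "n \<le> N"
    and lo: "c ^ n * u ^ e1 \<le> P * u ^ e2" and hi: "P * u ^ e2 \<le> C ^ n * u ^ e1"
    and large: "u > (1 / L) / c ^ N" "u > C ^ N / L"
  shows "e1 = e2"
proof (rule ccontr)
  assume "e1 \<noteq> e2"
  then consider "e2 < e1" | "e1 < e2" by linarith
  thus False
  proof cases
    case 1
    have "c ^ N \<le> c ^ n" using \<open>n \<le> N\<close> c by (intro power_decreasing) auto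
    moreover have "u \<le> u ^ (e1 - e2)" using power_increasing[of 1 "e1 - e2" u] 1 u by simp
    ultimately have "c ^ N * u \<le> c ^ n * u ^ (e1 - e2)" by (rule mult_mono) (use c u in auto)
    also have "c ^ n * u ^ (e1 - e2) \<le> P"
    proof -
      have "(c ^ n * u ^ (e1 - e2)) * u ^ e2 = c ^ n * u ^ e1"
        using 1 by (simp add: mult.assoc flip: power_add)
      hence "(c ^ n * u ^ (e1 - e2)) * u ^ e2 \<le> P * u ^ e2" using lo by (rule ord_eq_le_trans)
      thus ?thesis using u by (simp add: mult_le_cancel_right)
    qed
    also have "P \<le> 1 / L" by (rule L(3))
    finally have "u * c ^ N \<le> 1 / L" by (simp add: mult.commute)
    moreover have "0 < c ^ N" using c by simp
    ultimately have "u \<le> (1 / L) / c ^ N" by (simp only: pos_le_divide_eq)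
    thus False using large(1) by simp
  next
    case 2
    have "u \<le> u ^ (e2 - e1)" using power_increasing[of 1 "e2 - e1" u] 2 u by simp
    hence "L * u \<le> P * u ^ (e2 - e1)" by (intro mult_mono) (use u L in auto)
    also have "P * u ^ (e2 - e1) \<le> C ^ n"
    proof -
      have "(P * u ^ (e2 - e1)) * u ^ e1 = P * u ^ e2" using 2 by (simp add: mult.assoc flip: power_add)
      hence "(P * u ^ (e2 - e1)) * u ^ e1 \<le> C ^ n * u ^ e1" using hi by (rule ord_eq_le_trans)
      thus ?thesis using u by (simp add: mult_le_cancel_right)
    qed
    also have "\<dots> \<le> C ^ N" using C \<open>n \<le> N\<close> by (intro power_increasing) auto
    finally have "u * L \<le> C ^ N" by (simp add: mult.commute)
    hence "u \<le> C ^ N / L" using L by (simp only: pos_le_divide_eq)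
    thus False using large(2) by simp
  qed
qed

text \<open>A product of \<open>n \<le> d\<close> roots is \<open>\<asymp> u\<^sup>(\<^sup>d\<^sup>l\<^sup>-\<^sup>(\<^sup>d\<^sup>-\<^sup>k\<^sup>)\<^sup>n\<^sup>)\<^sup>/\<^sup>(\<^sup>k\<^sup>(\<^sup>d\<^sup>-\<^sup>k\<^sup>)\<^sup>)\<close>, with \<open>l\<close> the number of large
  roots; unless \<open>d\<close> divides \<open>n(d - k)\<close> this exponent is nonzero.\<close>

lemma root_products_unbalanced:
  assumes k: "0 < k" "k < d" and a0: "a 0 \<noteq> 0" and ad: "a d \<noteq> 0" and L: "0 < L" "L \<le> 1"
  obtains T where "\<And>t zs. \<bar>real_of_rat t\<bar> \<ge> T \<Longrightarrow> (\<forall>z\<in>set zs. rpoly (complete_poly d k a t) z = 0) \<Longrightarrow>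
    length zs \<le> d \<Longrightarrow> \<not> d dvd length zs * (d - k) \<Longrightarrow>
    \<not> (L \<le> (\<Prod>z\<leftarrow>zs. cmod z) \<and> (\<Prod>z\<leftarrow>zs. cmod z) \<le> 1 / L)"
proof -
  obtain c C T0 where c: "0 < c" "c \<le> 1" and C: "1 \<le> C"
    and bounds: "\<And>t (z::complex). \<bar>real_of_rat t\<bar> \<ge> T0 \<Longrightarrow> rpoly (complete_poly d k a t) z = 0 \<Longrightarrow>
       (c \<le> cmod z ^ (k * (d - k)) * \<bar>real_of_rat t\<bar> ^ (d - k)
          \<and> cmod z ^ (k * (d - k)) * \<bar>real_of_rat t\<bar> ^ (d - k) \<le> C)
     \<or> (c * \<bar>real_of_rat t\<bar> ^ k \<le> cmod z ^ (k * (d - k))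
          \<and> cmod z ^ (k * (d - k)) \<le> C * \<bar>real_of_rat t\<bar> ^ k)"
    using root_power_bounds[OF k a0 ad] by blast
  define Lp where "Lp = L ^ (d * d)"
  have Lp: "0 < Lp" using L unfolding Lp_def by simp
  define T where "T = max 1 (max T0 (max ((1 / Lp) / c ^ d) (C ^ d / Lp))) + 1"
  show ?thesis
  proof (rule that[of T], rule notI)
    fix t and zs :: "complex list"
    assume large: "\<bar>real_of_rat t\<bar> \<ge> T" and roots: "\<forall>z\<in>set zs. rpoly (complete_poly d k a t) z = 0"
      and len: "length zs \<le> d" and not_dvd: "\<not> d dvd length zs * (d - k)"
      and prod: "L \<le> (\<Prod>z\<leftarrow>zs. cmod z) \<and> (\<Prod>z\<leftarrow>zs. cmod z) \<le> 1 / L"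
    define u m Q where "u = \<bar>real_of_rat t\<bar>" and "m = k * (d - k)" and "Q = (\<Prod>z\<leftarrow>zs. cmod z)"
    have "T \<ge> 1 + 1" "T > (1 / Lp) / c ^ d" "T > C ^ d / Lp" "T > T0" unfolding T_def by linarith+
    moreover have "u \<ge> T" using large unfolding u_def .
    ultimately have u: "u \<ge> 1" "u > (1 / Lp) / c ^ d" "u > C ^ d / Lp" "u \<ge> T0" by linarith+
    have "\<forall>z\<in>set zs. 0 \<le> cmod z ^ m \<and>
      ((c \<le> cmod z ^ m * u ^ (d - k) \<and> cmod z ^ m * u ^ (d - k) \<le> C)
       \<or> (c * u ^ k \<le> cmod z ^ m \<and> cmod z ^ m \<le> C * u ^ k))"
      using bounds roots u(4) unfolding u_def m_def by auto
    from prod_list_two_scale_bounds[OF c(1) C _ this] u(1)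
    obtain s l where sl: "s + l = length zs"
      and lo: "c ^ length zs * u ^ (k * l) \<le> (\<Prod>z\<leftarrow>zs. cmod z ^ m) * u ^ ((d - k) * s)"
      and hi: "(\<Prod>z\<leftarrow>zs. cmod z ^ m) * u ^ ((d - k) * s) \<le> C ^ length zs * u ^ (k * l)" by auto
    have prod_eq: "(\<Prod>z\<leftarrow>zs. cmod z ^ m) = Q ^ m"
      unfolding Q_def by (induction zs) (simp_all add: power_mult_distrib)
    have Q: "L \<le> Q" "Q \<le> 1 / L" using prod unfolding Q_def by auto
    have "m \<le> d * d" unfolding m_def using k by (simp add: mult_le_mono)
    have "Lp \<le> L ^ m" unfolding Lp_def using L \<open>m \<le> d * d\<close> by (intro power_decreasing) auto
    also have "L ^ m \<le> Q ^ m" using L Q by (intro power_mono) auto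
    finally have Lp_le: "Lp \<le> Q ^ m" .
    have "Q ^ m \<le> (1 / L) ^ m" using L Q by (intro power_mono) auto
    also have "\<dots> \<le> (1 / L) ^ (d * d)" using L \<open>m \<le> d * d\<close> by (intro power_increasing) auto
    finally have le_Lp: "Q ^ m \<le> 1 / Lp" unfolding Lp_def by (simp add: power_one_over)
    have kl: "k * l = (d - k) * s"
      using power_scale_exponents_eq[OF u(1) c C Lp Lp_le le_Lp len] lo hi u(2,3) unfolding prod_eq
      by blast
    have "(d - k) * length zs = (d - k) * s + (d - k) * l" unfolding sl[symmetric] by (rule add_mult_distrib2)
    also have "\<dots> = k * l + (d - k) * l" using kl by simp
    also have "\<dots> = d * l" using k by (simp add: add_mult_distrib[symmetric])
    finally have "length zs * (d - k) = d * l" by (simp add: mult.commute)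
    thus False using not_dvd by simp
  qed
qed

lemma int_poly_roots_prod_norm:
  fixes G :: "int poly"
  obtains zs :: "complex list" where "length zs = degree G" "\<forall>z\<in>set zs. poly (of_int_poly G) z = 0"
    "\<bar>real_of_int (coeff G 0)\<bar> = \<bar>real_of_int (lead_coeff G)\<bar> * (\<Prod>z\<leftarrow>zs. cmod z)"
proof -
  define Gc where "Gc = (of_int_poly G :: complex poly)"
  obtain zs where zs: "smult (lead_coeff Gc) (\<Prod>z\<leftarrow>zs. [:- z, 1:]) = Gc" "length zs = degree Gc"
    using fundamental_theorem_algebra_factorized[of Gc] by blast
  have poly_prod: "poly (\<Prod>z\<leftarrow>zs. [:- z, 1:]) x = (\<Prod>z\<leftarrow>zs. x - z)" for x
    by (induction zs) (auto simp: algebra_simps)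
  have poly_Gc: "poly Gc x = lead_coeff Gc * (\<Prod>z\<leftarrow>zs. x - z)" for x
    unfolding poly_prod[symmetric] using arg_cong[OF zs(1), of "\<lambda>p. poly p x"] by simp
  have "\<forall>z\<in>set zs. poly Gc z = 0"
  proof
    fix z assume "z \<in> set zs"
    hence "(\<Prod>w\<leftarrow>zs. z - w) = 0" by (induction zs) auto
    thus "poly Gc z = 0" unfolding poly_Gc by simp
  qed
  moreover have "(\<Prod>z\<leftarrow>zs. 0 - z) = (\<Prod>z\<leftarrow>zs. - z)" by simp
  hence "cmod (poly Gc 0) = cmod (lead_coeff Gc) * (\<Prod>z\<leftarrow>zs. cmod z)"
    unfolding poly_Gc by (induction zs) (auto simp: norm_mult)
  moreover have "poly Gc 0 = of_int (coeff G 0)" "lead_coeff Gc = of_int (lead_coeff G)"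
    unfolding Gc_def by (simp_all add: poly_0_coeff_0)
  ultimately show ?thesis using that zs(2) unfolding Gc_def by simp
qed

lemma dvd_int_poly_root_product_bounds:
  fixes G F :: "int poly"
  assumes "G dvd F" and "coeff F 0 \<noteq> 0" and "F \<noteq> 0"
  obtains zs :: "complex list" where "length zs = degree G" "\<forall>z\<in>set zs. poly (of_int_poly F) z = 0"
    "1 / \<bar>real_of_int (lead_coeff F)\<bar> \<le> (\<Prod>z\<leftarrow>zs. cmod z)"
    "(\<Prod>z\<leftarrow>zs. cmod z) \<le> \<bar>real_of_int (coeff F 0)\<bar>"
proof -
  obtain H where F: "F = G * H" using assms(1) by blast
  obtain zs :: "complex list" where zs: "length zs = degree G" "\<forall>z\<in>set zs. poly (of_int_poly G) z = 0"
    "\<bar>real_of_int (coeff G 0)\<bar> = \<bar>real_of_int (lead_coeff G)\<bar> * (\<Prod>z\<leftarrow>zs. cmod z)"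
    by (rule int_poly_roots_prod_norm)
  have roots: "\<forall>z\<in>set zs. poly (of_int_poly F) z = 0" using zs(2) by (simp add: F hom_distribs)
  have "coeff F 0 = coeff G 0 * coeff H 0" unfolding F by (simp add: coeff_mult_0)
  hence G0: "1 \<le> \<bar>coeff G 0\<bar>" "\<bar>coeff G 0\<bar> \<le> \<bar>coeff F 0\<bar>"
    using assms(2) dvd_imp_le_int[of "coeff F 0" "coeff G 0"] by auto
  have "G \<noteq> 0" "H \<noteq> 0" using assms(3) F by auto
  hence "lead_coeff G \<noteq> 0" "lead_coeff H \<noteq> 0" by simp_all
  have "lead_coeff F = lead_coeff G * lead_coeff H" unfolding F by (rule lead_coeff_mult)
  hence lc: "1 \<le> \<bar>lead_coeff G\<bar>" "\<bar>lead_coeff G\<bar> \<le> \<bar>lead_coeff F\<bar>"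
    using \<open>lead_coeff G \<noteq> 0\<close> \<open>lead_coeff H \<noteq> 0\<close> dvd_imp_le_int[of "lead_coeff F" "lead_coeff G"]
    by (auto, arith)
  define g0 gl fl f0 where "g0 = \<bar>real_of_int (coeff G 0)\<bar>" and "gl = \<bar>real_of_int (lead_coeff G)\<bar>"
    and "fl = \<bar>real_of_int (lead_coeff F)\<bar>" and "f0 = \<bar>real_of_int (coeff F 0)\<bar>"
  have real_bounds: "1 \<le> g0" "g0 \<le> f0" "1 \<le> gl" "gl \<le> fl"
    using G0 lc unfolding g0_def gl_def fl_def f0_def by linarith+
  define P where "P = (\<Prod>z\<leftarrow>zs. cmod z)"
  have "g0 = gl * P" using zs(3) unfolding g0_def gl_def P_def .
  moreover have "gl \<noteq> 0" using real_bounds by simp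
  ultimately have P: "P = g0 / gl" by simp
  have "1 / fl \<le> 1 / gl" using real_bounds by (intro divide_left_mono) auto
  also have "\<dots> \<le> P" unfolding P using real_bounds by (intro divide_right_mono) auto
  finally have "1 / fl \<le> P" .
  moreover have "P \<le> g0" unfolding P using real_bounds by (simp add: divide_le_eq mult_le_cancel_left1)
  hence "P \<le> f0" using real_bounds by linarith
  ultimately show ?thesis using that zs(1) roots unfolding P_def fl_def f0_def by blast
qed

text \<open>Nora's choice \<open>t = M/p\<close> for a large prime \<open>p\<close> and \<open>p \<nmid> M\<close>: after clearing denominators
  all coefficients except the \<open>k\<close>-th are divisible by \<open>p\<close>, but not by \<open>p\<^sup>2\<close>.\<close>

lemma complete_poly_factor_roots:
  fixes a :: "nat \<Rightarrow> rat" and q :: "int poly" and p D M :: int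
  assumes k: "k \<le> d" and a0: "k \<noteq> 0 \<Longrightarrow> a 0 \<noteq> 0" and ad: "k \<noteq> d \<Longrightarrow> a d \<noteq> 0"
    and p: "prime p" and D: "0 < D" "D < p"
    and q: "complete_poly d k a 0 = smult (inverse (of_int D)) (of_int_poly q)"
    and q_small: "\<And>i. i \<le> d \<Longrightarrow> \<bar>coeff q i\<bar> < p"
    and t: "t = of_int M / of_int p" "\<not> p dvd M" and "t \<noteq> 0"
    and factor: "complete_poly d k a t = A * B" "\<not> is_unit A" "\<not> is_unit B"
  obtains zs :: "complex list" where "0 < k" "k < d" "length zs = k \<or> length zs = d - k"
    "\<forall>z\<in>set zs. rpoly (complete_poly d k a t) z = 0"
    "1 / max 1 \<bar>real_of_int (p * coeff q d)\<bar> \<le> (\<Prod>z\<leftarrow>zs. cmod z)"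
    "(\<Prod>z\<leftarrow>zs. cmod z) \<le> max 1 \<bar>real_of_int (p * coeff q 0)\<bar>"
proof -
  have coeff_q: "rat_of_int (coeff q i) = (if i \<le> d \<and> i \<noteq> k then of_int D * a i else 0)" for i
  proof -
    have "coeff (complete_poly d k a 0) i = inverse (of_int D) * of_int (coeff q i)"
      using arg_cong[OF q, of "\<lambda>f. coeff f i"] by simp
    hence "of_int (coeff q i) = of_int D * coeff (complete_poly d k a 0) i" using D by simp
    thus ?thesis by (simp add: coeff_complete_poly)
  qed
  define F where "F = smult p q + monom (D * M) k"
  have coeff_F: "coeff F i = (if i = k then D * M else p * coeff q i)" for i
    using coeff_q[of k] by (auto simp: F_def coeff_monom)
  have "p \<noteq> 0" using p by auto
  have F_t: "of_int_poly F = smult (of_int (p * D)) (complete_poly d k a t)"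
  proof (rule poly_eqI)
    fix i
    consider "i = k" | "i \<noteq> k" "i \<le> d" | "\<not> i \<le> d" by blast
    thus "coeff (of_int_poly F) i = coeff (smult (of_int (p * D)) (complete_poly d k a t)) i"
    proof cases
      case 1
      thus ?thesis using k t(1) \<open>p \<noteq> 0\<close> by (simp add: coeff_F coeff_complete_poly)
    next
      case 2
      thus ?thesis using coeff_q[of i] by (simp add: coeff_F coeff_complete_poly)
    next
      case 3
      thus ?thesis using coeff_q[of i] k by (auto simp: coeff_F coeff_complete_poly)
    qed
  qed
  have nonzero: "coeff q i \<noteq> 0" if "i \<le> d" "i \<noteq> k" "a i \<noteq> 0" for i
    using coeff_q[of i] that D by auto
  have "degree (complete_poly d k a t) = d" using \<open>t \<noteq> 0\<close> ad by (intro degree_complete_poly) auto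
  hence deg_F: "degree F = d"
    using arg_cong[OF F_t, of degree] p D by (simp add: degree_map_poly)
  have not_sq: "\<not> p ^ 2 dvd p * coeff q i" if "i \<le> d" "i \<noteq> k" "a i \<noteq> 0" for i
  proof
    assume "p ^ 2 dvd p * coeff q i"
    hence "p dvd coeff q i" using \<open>p \<noteq> 0\<close> by (simp add: power2_eq_square)
    hence "\<bar>p\<bar> \<le> \<bar>coeff q i\<bar>" using dvd_imp_le_int nonzero[OF that] by blast
    thus False using q_small[OF that(1)] by simp
  qed
  have "\<not> p dvd D" using D zdvd_imp_le by fastforce
  hence "\<not> p dvd D * M" using t(2) p by (simp add: prime_dvd_mult_iff)
  have "of_int_poly F = smult (of_int (p * D)) A * B" using F_t factor(1) by (simp add: mult_smult_left)
  then obtain G H where GH: "F = G * H" "degree G = degree (smult (of_int (p * D)) A)" "degree H = degree B"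
    using rat_to_int_factor by blast
  have "coeff (complete_poly d k a t) d \<noteq> 0" using \<open>t \<noteq> 0\<close> ad by (simp add: coeff_complete_poly)
  hence "A \<noteq> 0" "B \<noteq> 0" using factor(1) by auto
  hence "degree A > 0" "degree B > 0" using factor(2,3) is_unit_iff_degree by auto
  hence deg_GH: "degree G > 0" "degree H > 0" using GH(2,3) \<open>p \<noteq> 0\<close> D by simp_all
  have others: "\<And>i. i \<noteq> k \<Longrightarrow> p dvd coeff F i" and at_k: "\<not> p dvd coeff F k"
    using coeff_F \<open>\<not> p dvd D * M\<close> by simp_all
  have F0: "k \<noteq> 0 \<Longrightarrow> \<not> p ^ 2 dvd coeff F 0" using coeff_F[of 0] not_sq[of 0] a0 by simp
  have Fd: "k \<noteq> d \<Longrightarrow> \<not> p ^ 2 dvd coeff F d" using coeff_F[of d] not_sq[of d] ad by simp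
  note degrees = factor_degrees_mod_prime[OF p GH(1) deg_F others at_k F0 Fd deg_GH]
  hence k_range: "0 < k" "k < d" and deg_G: "degree G = k \<or> degree G = d - k" by blast+
  have "coeff F 0 = p * coeff q 0" using coeff_F[of 0] k_range by simp
  hence F0_nonzero: "coeff F 0 \<noteq> 0" using nonzero[of 0] a0 k_range \<open>p \<noteq> 0\<close> by simp
  hence "F \<noteq> 0" by auto
  have "G dvd F" using GH(1) by simp
  obtain zs where zs: "length zs = degree G" "\<forall>z\<in>set zs. poly (of_int_poly F) z = 0"
    "1 / \<bar>real_of_int (lead_coeff F)\<bar> \<le> (\<Prod>z\<leftarrow>zs. cmod z)"
    "(\<Prod>z\<leftarrow>zs. cmod z) \<le> \<bar>real_of_int (coeff F 0)\<bar>"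
    by (rule dvd_int_poly_root_product_bounds[OF \<open>G dvd F\<close> F0_nonzero \<open>F \<noteq> 0\<close>])
  have "poly (of_int_poly F) z = of_int (p * D) * rpoly (complete_poly d k a t) z" for z :: complex
  proof -
    have "(of_int_poly F :: complex poly) = map_poly of_rat (of_int_poly F)"
      by (simp add: map_poly_map_poly o_def)
    thus ?thesis unfolding F_t rpoly_def by (simp add: hom_distribs)
  qed
  hence roots: "\<forall>z\<in>set zs. rpoly (complete_poly d k a t) z = 0" using zs(2) p D by auto
  have lc: "lead_coeff F = p * coeff q d" and c0: "coeff F 0 = p * coeff q 0"
    using deg_F coeff_F k_range by auto
  have "1 / max 1 \<bar>real_of_int (lead_coeff F)\<bar> \<le> 1 / \<bar>real_of_int (lead_coeff F)\<bar>"
    using \<open>F \<noteq> 0\<close> by (intro divide_left_mono) auto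
  from order_trans[OF this zs(3)]
  have lower: "1 / max 1 \<bar>real_of_int (p * coeff q d)\<bar> \<le> (\<Prod>z\<leftarrow>zs. cmod z)"
    unfolding lc .
  from order_trans[OF zs(4) max.cobounded2]
  have upper: "(\<Prod>z\<leftarrow>zs. cmod z) \<le> max 1 \<bar>real_of_int (p * coeff q 0)\<bar>"
    unfolding c0 .
  have "length zs = k \<or> length zs = d - k" using zs(1) deg_G by simp
  from that[OF k_range this roots lower upper] show ?thesis .
qed

lemma large_coeff_mod_prime:
  fixes p :: int and B :: real and c :: rat
  assumes "prime p" and "c \<noteq> 0"
  obtains M where "\<not> p dvd M" "B < \<bar>real_of_rat (of_int M / of_int p)\<bar>"
    "real_of_rat (of_int M / of_int p) * real_of_rat c < 0"
proof -
  define N where "N = \<lceil>\<bar>B\<bar>\<rceil> + 1"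
  define \<sigma> :: int where "\<sigma> = (if c > 0 then -1 else 1)"
  define M where "M = \<sigma> * (1 + p * N)"
  define R where "R = real_of_int (1 + p * N) / real_of_int p"
  have p: "p > 1" using assms(1) by (simp add: prime_gt_1_int)
  have N: "real_of_int N > \<bar>B\<bar>" "N \<ge> 1" unfolding N_def by linarith+
  have "\<not> p dvd 1 + p * N"
  proof
    assume "p dvd 1 + p * N"
    hence "p dvd 1" by (simp add: dvd_add_left_iff)
    thus False using p by simp
  qed
  have "0 < p * N" using p N by simp
  hence "\<bar>1 + p * N\<bar> = 1 + p * N" by (intro abs_of_pos) linarith
  moreover have "\<bar>\<sigma>\<bar> = 1" unfolding \<sigma>_def by simp
  ultimately have "\<bar>M\<bar> = 1 + p * N" unfolding M_def abs_mult by simp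
  have "p dvd M \<longleftrightarrow> p dvd \<bar>M\<bar>" by (rule dvd_abs_iff[symmetric])
  hence not_dvd: "\<not> p dvd M" unfolding \<open>\<bar>M\<bar> = 1 + p * N\<close> using \<open>\<not> p dvd 1 + p * N\<close> by blast
  have "0 < 1 / real_of_int p" using p by simp
  moreover have "R = 1 / real_of_int p + real_of_int N"
    unfolding R_def using p by (simp add: add_divide_distrib)
  ultimately have R: "B < R" "0 < R" using N abs_ge_self[of B] by linarith+
  have "real_of_rat (of_int M / of_int p) = real_of_int M / real_of_int p"
    by (simp only: of_rat_divide of_rat_of_int_eq)
  also have "\<dots> = (if c > 0 then - R else R)" unfolding M_def R_def \<sigma>_def by (simp add: minus_divide_left)
  finally have t: "real_of_rat (of_int M / of_int p) = (if c > 0 then - R else R)" .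
  show ?thesis
  proof (rule that[OF not_dvd])
    show "B < \<bar>real_of_rat (of_int M / of_int p)\<bar>" using t R by simp
    show "real_of_rat (of_int M / of_int p) * real_of_rat c < 0"
      using t R assms(2) by (auto simp: mult_less_0_iff)
  qed
qed

lemma dvd_square_if_dvd_factor_degree:
  fixes d k j :: nat
  assumes "k \<le> d" "j = k \<or> j = d - k" and "d dvd j * (d - k)"
  shows "d dvd k ^ 2"
  using assms(2)
proof
  assume "j = k"
  have "k * (d - k) + k ^ 2 = k * d" using assms(1) by (simp add: power2_eq_square diff_mult_distrib2)
  hence "d dvd k * (d - k) + k ^ 2" by simp
  thus ?thesis using assms(3) \<open>j = k\<close> by (simp add: dvd_add_right_iff)
next
  assume "j = d - k"
  have "int d dvd int ((d - k) * (d - k))" using assms(3) \<open>j = d - k\<close> by (simp only: int_dvd_int_iff)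
  hence "int d dvd (int d - int k) * (int d - int k)" using assms(1) by (simp add: of_nat_diff)
  moreover have "(int d - int k) * (int d - int k) = int d * (int d - 2 * int k) + int k ^ 2"
    by (simp add: algebra_simps power2_eq_square)
  ultimately have "int d dvd int d * (int d - 2 * int k) + int k ^ 2" by simp
  hence "int d dvd int (k ^ 2)" by (simp add: dvd_add_right_iff)
  thus ?thesis by (simp only: int_dvd_int_iff)
qed

text \<open>The last move: a nonzero \<open>t\<close> making the polynomial irreducible with a real and a
  non-real root. The hypothesis on \<open>k\<close> excludes the degree of a possible factor.\<close>

lemma last_move:
  fixes a :: "nat \<Rightarrow> rat"
  assumes d: "5 \<le> d" and k: "k \<le> d" and a0: "k \<noteq> 0 \<Longrightarrow> a 0 \<noteq> 0" and ad: "k \<noteq> d \<Longrightarrow> a d \<noteq> 0"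
    and good: "k = 0 \<or> k = d \<or> \<not> d dvd k ^ 2"
  obtains t where "t \<noteq> 0" "\<And>z::complex. rpoly (complete_poly d k a t) z = 0 \<Longrightarrow> z \<notin> Qab"
proof -
  obtain D q where "rat_to_int_poly (complete_poly d k a 0) = (D, q)" by (metis surj_pair)
  hence D: "0 < D" and q: "complete_poly d k a 0 = smult (inverse (of_int D)) (of_int_poly q)"
    using rat_to_int_poly by auto
  obtain p' :: nat where p': "prime p'" "nat (D + (\<Sum>i\<le>d. \<bar>coeff q i\<bar>)) < p'"
    using bigger_prime by blast
  define p where "p = int p'"
  have sum: "\<bar>coeff q i\<bar> \<le> (\<Sum>i\<le>d. \<bar>coeff q i\<bar>)" if "i \<le> d" for i
    using that by (intro member_le_sum) auto
  have "0 \<le> (\<Sum>i\<le>d. \<bar>coeff q i\<bar>)" by (rule sum_nonneg) simp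
  hence "D + (\<Sum>i\<le>d. \<bar>coeff q i\<bar>) < p" using p'(2) D unfolding p_def by linarith
  moreover have "prime p" using p'(1) unfolding p_def by simp
  ultimately have p: "prime p" "D < p" "\<And>i. i \<le> d \<Longrightarrow> \<bar>coeff q i\<bar> < p"
    using sum \<open>0 \<le> _\<close> D by (simp, linarith, smt (verit))
  define X0 Xd where "X0 = max 1 \<bar>real_of_int (p * coeff q 0)\<bar>"
    and "Xd = max 1 \<bar>real_of_int (p * coeff q d)\<bar>"
  define L where "L = 1 / (X0 * Xd)"
  have X: "1 \<le> X0" "1 \<le> Xd" unfolding X0_def Xd_def by auto
  have "Xd \<le> X0 * Xd" "X0 \<le> X0 * Xd"
    using mult_right_mono[OF X(1), of Xd] mult_left_mono[OF X(2), of X0] X by simp_all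
  hence L_le: "L \<le> 1 / Xd" unfolding L_def using X by (intro divide_left_mono) auto
  have le_L: "X0 \<le> 1 / L" unfolding L_def using \<open>X0 \<le> X0 * Xd\<close> by simp
  have "1 \<le> X0 * Xd" using \<open>X0 \<le> X0 * Xd\<close> X by linarith
  hence L: "0 < L" "L \<le> 1" unfolding L_def by auto
  obtain T where T: "\<And>t zs. 0 < k \<Longrightarrow> k < d \<Longrightarrow> \<bar>real_of_rat t\<bar> \<ge> T \<Longrightarrow>
    \<forall>z\<in>set zs. rpoly (complete_poly d k a t) z = 0 \<Longrightarrow> length zs \<le> d \<Longrightarrow>
    \<not> d dvd length zs * (d - k) \<Longrightarrow> \<not> (L \<le> (\<Prod>z\<leftarrow>zs. cmod z) \<and> (\<Prod>z\<leftarrow>zs. cmod z) \<le> 1 / L)"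
  proof (cases "0 < k \<and> k < d")
    case True
    hence "a 0 \<noteq> 0" "a d \<noteq> 0" using a0 ad by auto
    from root_products_unbalanced[OF conjunct1[OF True] conjunct2[OF True] this L] obtain T where
      "\<And>t zs. \<bar>real_of_rat t\<bar> \<ge> T \<Longrightarrow> \<forall>z\<in>set zs. rpoly (complete_poly d k a t) z = 0 \<Longrightarrow>
        length zs \<le> d \<Longrightarrow> \<not> d dvd length zs * (d - k) \<Longrightarrow>
        \<not> (L \<le> (\<Prod>z\<leftarrow>zs. cmod z) \<and> (\<Prod>z\<leftarrow>zs. cmod z) \<le> 1 / L)" by blast
    thus ?thesis using that by blast
  next
    case False
    thus ?thesis using that[of 0] by blast
  qed
  define c where "c = (if k = 0 then a d else a 0)"
  have "c \<noteq> 0" unfolding c_def using a0 ad d by auto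
  then obtain M where M: "\<not> p dvd M"
    "max T (max (crit_bound d k a) (\<Sum>i\<le>d. \<bar>real_of_rat (a i)\<bar>)) < \<bar>real_of_rat (of_int M / of_int p)\<bar>"
    "real_of_rat (of_int M / of_int p) * real_of_rat c < 0"
    by (rule large_coeff_mod_prime[OF p(1)])
  define t where "t = (of_int M / of_int p :: rat)"
  let ?f = "complete_poly d k a t"
  have t: "t \<noteq> 0" using M(3) unfolding t_def by auto
  have irr: "irreducible ?f"
  proof (rule ccontr)
    assume "\<not> irreducible ?f"
    moreover have "degree ?f = d" using t ad by (intro degree_complete_poly) auto
    hence "?f \<noteq> 0" "\<not> is_unit ?f" using d by (auto simp: is_unit_iff_degree)
    ultimately obtain A B where "?f = A * B" "\<not> is_unit A" "\<not> is_unit B"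
      unfolding irreducible_def by blast
    from complete_poly_factor_roots[OF k a0 ad p(1) D p(2) q p(3) t_def M(1) t this]
    obtain zs where "0 < k" "k < d" and zs: "length zs = k \<or> length zs = d - k"
      "\<forall>z\<in>set zs. rpoly ?f z = 0" "1 / Xd \<le> (\<Prod>z\<leftarrow>zs. cmod z)" "(\<Prod>z\<leftarrow>zs. cmod z) \<le> X0"
      unfolding X0_def Xd_def by blast
    have "\<not> d dvd length zs * (d - k)"
      using dvd_square_if_dvd_factor_degree[OF k zs(1)] good \<open>0 < k\<close> \<open>k < d\<close> by auto
    moreover have "length zs \<le> d" using zs(1) \<open>k < d\<close> by auto
    moreover have "T \<le> \<bar>real_of_rat t\<bar>" using M(2) unfolding t_def by simp
    ultimately have "\<not> (L \<le> (\<Prod>z\<leftarrow>zs. cmod z) \<and> (\<Prod>z\<leftarrow>zs. cmod z) \<le> 1 / L)"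
      using T[OF \<open>0 < k\<close> \<open>k < d\<close> _ zs(2)] by simp
    thus False using order_trans[OF L_le zs(3)] order_trans[OF zs(4) le_L] by blast
  qed
  obtain x :: real where "rpoly ?f x = 0"
  proof (cases "k = 0")
    case True
    thus ?thesis using complete_poly_real_root_0[of d t a] that M(3) d unfolding c_def t_def by auto
  next
    case False
    thus ?thesis using complete_poly_real_root[of k d t a] that M k unfolding c_def t_def by auto
  qed
  hence "rpoly ?f (complex_of_real x) = 0" using of_real_rpoly[of ?f x, where 'a = complex] by simp
  moreover obtain z0 :: complex where "z0 \<notin> \<real>" "rpoly ?f z0 = 0"
    using complete_poly_nonreal_root[OF d k a0 ad t irr] M(2) unfolding t_def by auto
  ultimately show ?thesis using that t not_in_Qab_if_real_and_nonreal_roots[OF irr] by blast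
qed

section \<open>Nora's strategy\<close>

definition free_coeffs :: "nat \<Rightarrow> (nat \<Rightarrow> rat option) \<Rightarrow> nat set" where
  "free_coeffs d s = {i. i \<le> d \<and> s i = None}"

text \<open>Indices at which Nora's last move could fail: a factor of degree \<open>k\<close> or \<open>d - k\<close> is not
  excluded by the size argument when \<open>d\<close> divides \<open>k\<^sup>2\<close>.\<close>

definition bad_coeffs :: "nat \<Rightarrow> nat set" where
  "bad_coeffs d = {k. 0 < k \<and> k < d \<and> d dvd k ^ 2}"

text \<open>Nora fills bad coefficients first (with \<open>1\<close>). No two consecutive indices are bad, so
  there are at most \<open>d div 2\<close> of them and they are gone before her last move.\<close>

definition nora_invariant :: "nat \<Rightarrow> nat \<Rightarrow> (nat \<Rightarrow> rat option) \<Rightarrow> bool" where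
  "nora_invariant d r s \<longleftrightarrow> card (free_coeffs d s) = r \<and> s 0 \<noteq> Some 0 \<and> s d \<noteq> Some 0 \<and>
     card (free_coeffs d s \<inter> bad_coeffs d) \<le> (r - 1) div 2"

lemma finite_free_coeffs: "finite (free_coeffs d s)"
  unfolding free_coeffs_def by simp

lemma free_coeffs_upd: "free_coeffs d (s(i := Some v)) = free_coeffs d s - {i}"
  unfolding free_coeffs_def by auto

lemma card_bad_coeffs:
  assumes "d \<ge> 2"
  shows "card (bad_coeffs d) \<le> d div 2"
proof -
  have "inj_on (\<lambda>k. k div 2) (bad_coeffs d)"
  proof (rule inj_onI, rule ccontr)
    fix x y assume x: "x \<in> bad_coeffs d" and y: "y \<in> bad_coeffs d" and "x div 2 = y div 2" "x \<noteq> y"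
    hence "y = Suc x \<or> x = Suc y" by presburger
    then obtain u where u: "d dvd u ^ 2" "d dvd (Suc u) ^ 2" using x y unfolding bad_coeffs_def by blast
    obtain q :: nat where q: "prime q" "q dvd d" using prime_factor_nat[of d] assms by auto
    hence "q dvd u" "q dvd Suc u" using u by (meson dvd_trans prime_dvd_power)+
    hence "q dvd 1" using dvd_diff_nat[of q "Suc u" u] by simp
    thus False using q(1) by simp
  qed
  moreover have "(\<lambda>k. k div 2) ` bad_coeffs d \<subseteq> {1..(d - 1) div 2}"
  proof
    fix y assume "y \<in> (\<lambda>k. k div 2) ` bad_coeffs d"
    then obtain k where k: "k \<in> bad_coeffs d" "y = k div 2" by blast
    hence "k \<noteq> 1" using assms unfolding bad_coeffs_def by auto
    thus "y \<in> {1..(d - 1) div 2}" using k unfolding bad_coeffs_def by (auto intro: div_le_mono)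
  qed
  ultimately have "card (bad_coeffs d) \<le> card {1..(d - 1) div 2}"
    by (intro card_inj_on_le) simp_all
  thus ?thesis by simp
qed

lemma nora_invariant_start:
  assumes "d \<ge> 2"
  shows "nora_invariant d (d + 1) (\<lambda>_. None)"
proof -
  have "free_coeffs d (\<lambda>_. None) = {..d}" unfolding free_coeffs_def by auto
  moreover have "bad_coeffs d \<subseteq> {..d}" unfolding bad_coeffs_def by auto
  ultimately show ?thesis
    using card_bad_coeffs[OF assms] unfolding nora_invariant_def by (simp add: Int_absorb1)
qed

lemma nora_invariant_wanda_move:
  assumes "nora_invariant d (Suc r) s" "odd r" "legal_move d s i v"
  shows "nora_invariant d r (s(i := Some v))"
proof -
  have "i \<in> free_coeffs d s" using assms(3) unfolding legal_move_def free_coeffs_def by simp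
  moreover have "card ((free_coeffs d s - {i}) \<inter> bad_coeffs d) \<le> card (free_coeffs d s \<inter> bad_coeffs d)"
    by (intro card_mono) (auto simp: finite_free_coeffs)
  moreover have "(Suc r - 1) div 2 = (r - 1) div 2" using assms(2) by (auto elim: oddE)
  ultimately show ?thesis
    using assms finite_free_coeffs[of d s]
    unfolding nora_invariant_def free_coeffs_upd legal_move_def by (auto simp: Diff_Int_distrib2)
qed

lemma nora_invariant_nora_move:
  assumes inv: "nora_invariant d (Suc r) s" and "even r" "r \<noteq> 0"
  obtains i where "legal_move d s i 1" "nora_invariant d r (s(i := Some 1))"
proof -
  have free: "card (free_coeffs d s) = Suc r" using inv unfolding nora_invariant_def by simp
  obtain i where i: "i \<in> free_coeffs d s" "free_coeffs d s \<inter> bad_coeffs d \<noteq> {} \<Longrightarrow> i \<in> bad_coeffs d"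
  proof (cases "free_coeffs d s \<inter> bad_coeffs d = {}")
    case True
    have "free_coeffs d s \<noteq> {}" using free by auto
    thus ?thesis using that True by blast
  next
    case False
    thus ?thesis using that by blast
  qed
  have "card ((free_coeffs d s - {i}) \<inter> bad_coeffs d) \<le> (r - 1) div 2"
  proof (cases "free_coeffs d s \<inter> bad_coeffs d = {}")
    case False
    hence "card ((free_coeffs d s - {i}) \<inter> bad_coeffs d) = card (free_coeffs d s \<inter> bad_coeffs d) - 1"
      using i finite_free_coeffs[of d s] by (simp add: Diff_Int_distrib2)
    thus ?thesis using inv assms(2,3) unfolding nora_invariant_def by (auto elim!: evenE)
  qed (simp add: Diff_Int_distrib2)
  moreover have "legal_move d s i 1" using i(1) unfolding legal_move_def free_coeffs_def by simp
  ultimately show ?thesis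
    using that inv free i(1) finite_free_coeffs[of d s]
    unfolding nora_invariant_def free_coeffs_upd by auto
qed

lemma nora_wins_last_move:
  assumes d: "5 \<le> d" and inv: "nora_invariant d 1 s"
  shows "nora_wins d 1 s"
proof -
  have "card (free_coeffs d s) = 1" using inv unfolding nora_invariant_def by simp
  then obtain k where k: "free_coeffs d s = {k}" by (rule card_1_singletonE)
  hence "k \<le> d" "s k = None" unfolding free_coeffs_def by auto
  have "card ({k} \<inter> bad_coeffs d) = 0" using inv k unfolding nora_invariant_def by simp
  hence "k \<notin> bad_coeffs d" by (cases "k \<in> bad_coeffs d") auto
  hence "\<not> (0 < k \<and> k < d \<and> d dvd k ^ 2)" unfolding bad_coeffs_def by blast
  hence good: "k = 0 \<or> k = d \<or> \<not> d dvd k ^ 2" using \<open>k \<le> d\<close> by (metis le_neq_implies_less neq0_conv)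
  define a where "a i = the (s i)" for i
  have assigned: "s i = Some (a i)" if "i \<le> d" "i \<noteq> k" for i
  proof -
    have "i \<notin> free_coeffs d s" using that(2) k by simp
    hence "s i \<noteq> None" using that(1) unfolding free_coeffs_def by simp
    thus ?thesis unfolding a_def by auto
  qed
  have a0: "a 0 \<noteq> 0" if "k \<noteq> 0"
    using assigned[of 0] that inv unfolding nora_invariant_def by auto
  have ad: "a d \<noteq> 0" if "k \<noteq> d"
    using assigned[of d] that inv unfolding nora_invariant_def by auto
  obtain t where t: "t \<noteq> 0" "\<And>z::complex. rpoly (complete_poly d k a t) z = 0 \<Longrightarrow> z \<notin> Qab"
    using last_move[OF d \<open>k \<le> d\<close> a0 ad good] by blast
  have "final_poly d (s(k := Some t)) = complete_poly d k a t"
    unfolding final_poly_def complete_poly_def a_def by (rule sum.cong) auto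
  hence "nora_goal d (s(k := Some t))" using t(2) unfolding nora_goal_def rpoly_def by simp
  moreover have "legal_move d s k t" using \<open>k \<le> d\<close> \<open>s k = None\<close> t(1) unfolding legal_move_def by simp
  ultimately show ?thesis unfolding One_nat_def nora_wins.simps by auto
qed

lemma nora_wins_if_invariant:
  assumes "5 \<le> d" "nora_invariant d r s" "r \<noteq> 0"
  shows "nora_wins d r s"
  using assms(2,3)
proof (induction r arbitrary: s rule: nat_less_induct)
  case (1 r)
  then obtain r' where r: "r = Suc r'" by (cases r) auto
  show ?case
  proof (cases "r' = 0")
    case True
    thus ?thesis using nora_wins_last_move[OF assms(1)] 1(2) r by simp
  next
    case False
    show ?thesis
    proof (cases "even r'")
      case True
      from nora_invariant_nora_move[of d r' s] 1(2) True False r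
      obtain i where "legal_move d s i 1" "nora_invariant d r' (s(i := Some 1))" by blast
      thus ?thesis using 1(1) False True r by auto
    next
      case odd: False
      have "nora_wins d r' (s(i := Some v))" if "legal_move d s i v" for i v
        using 1(1) nora_invariant_wanda_move[OF _ odd that] 1(2) False r by auto
      thus ?thesis using odd r by auto
    qed
  qed
qed

theorem proposition4:
  fixes d :: nat
  assumes "d > 8"
  shows "nora_wins d (d + 1) (\<lambda>_. None)"
  using nora_wins_if_invariant[OF _ nora_invariant_start] assms by simp

end
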